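(* Let $M,N\in\Lambda$. If $\mathrm{NF}(\mathcal T(M))=\mathrm{NF}(\mathcal T(N))$ then, for every head context $C[-]$, we have $\mathrm{NF}(\mathcal T(C[M]))=\mathrm{NF}(\mathcal T(C[N]))$.
   Context: $\lambda$-terms and values: $M::=V\mid MN$, $V::=x\mid\lambda x.M$, up to $\alpha$-conversion. A head context is $C[-]=(\lambda x_1\dots x_n.[-])V_1\cdots V_m$ with $n,m\ge0$ and $V_1,\dots,V_m$ values; $C[M]$ is obtained by replacing the hole by $M$ (possibly capturing free variables). Resource calculus: resource values $v::=x\mid\lambda x.t$; simple terms $s,t::=st\mid[v_1,\dots,v_k]$ (bags are finite multisets); $[x^n]$ is $n$ copies of $x$. Linear substitution $e\langle x:=v_1,\dots,v_n\rangle$ is the set of terms obtained by replacing the $n$ free occurrences of $x$ in $e$ bijectively by $v_1,\dots,v_n$ (over all permutations), or $\emptyset$ if $x$ does not occur exactly $n$ times free. Constructors extend multilinearly to sets. Rules: $(\beta_r)$ $[\lambda x.t][v_1,\dots,v_n]\to t\langle x:=v_1,\dots,v_n\rangle$; $(0)$ $[v_1,\dots,v_n]t\to\emptyset$ if $n\ne1$; $(\sigma_1)$ $[\lambda x.t]s_1s_2\to[\lambda x.ts_2]s_1$ if $x\notin\mathrm{FV}(s_1)$; $(\sigma_3)$ $[v]([\lambda x.t]s)\to[\lambda x.[v]t]s$ if $x\notin\mathrm{FV}(v)$. $\to_{\mathsf r}$ is the closure of these rules under abstraction, both sides of application, elements of bags, and on finite sets ($e\to\mathcal E_1$, $e\notin\mathcal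 E_2$ imply $\{e\}\cup\mathcal E_2\to\mathcal E_1\cup\mathcal E_2$); it is confluent and strongly normalizing, $\mathrm{nf}(e)$ is the normal form and $\mathrm{NF}(\mathcal E)=\bigcup_{e\in\mathcal E}\mathrm{nf}(e)$. Taylor expansion: $\mathcal T(x)=\{[x^n]\mid n\ge0\}$, $\mathcal T(\lambda x.N)=\{[\lambda x.t_1,\dots,\lambda x.t_n]\mid n\ge0,\ t_i\in\mathcal T(N)\}$, $\mathcal T(PQ)=\{st\mid s\in\mathcal T(P),t\in\mathcal T(Q)\}$. *)

theory Defs
  imports "HOL-Library.Multiset"
begin

section \<open>Lambda terms (de Bruijn indices, i.e. terms up to alpha-conversion)\<close>

datatype lterm = LVar nat | LLam lterm | LApp lterm lterm

fun is_lvalue :: "lterm \<Rightarrow> bool" where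
  "is_lvalue (LVar x) = True"
| "is_lvalue (LLam M) = True"
| "is_lvalue (LApp M N) = False"

text \<open>Head context (\<lambda>x1...xn.[-]) V1 ... Vm, plugged with M (capture of the
  free indices 0..n-1 of M by the n abstractions).\<close>
definition plug_head :: "nat \<Rightarrow> lterm list \<Rightarrow> lterm \<Rightarrow> lterm" where
  "plug_head n Vs M = foldl LApp ((LLam ^^ n) M) Vs"

datatype rterm = App rterm rterm | Bag "rval multiset"
     and rval = Var nat | Lam rterm

primrec lift_t :: "nat \<Rightarrow> rterm \<Rightarrow> rterm"
    and lift_v :: "nat \<Rightarrow> rval \<Rightarrow> rval" where
  "lift_t k (App s t) = App (lift_t k s) (lift_t k t)"
| "lift_t k (Bag B) = Bag (image_mset (lift_v k) B)"
| "lift_v k (Var i) = Var (if i < k then i else Suc i)"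
| "lift_v k (Lam t) = Lam (lift_t (Suc k) t)"

text \<open>Linear substitution: lsub_t e x V e' means e' is obtained from e by replacing
  bijectively the free occurrences of index x by the values of the multiset V
  (V already lifted to the depth of x); the indices above x are decremented since
  the binder of x is removed.\<close>
inductive lsub_t :: "rterm \<Rightarrow> nat \<Rightarrow> rval multiset \<Rightarrow> rterm \<Rightarrow> bool"
  and lsub_v :: "rval \<Rightarrow> nat \<Rightarrow> rval multiset \<Rightarrow> rval \<Rightarrow> bool"
  and lsub_b :: "rval multiset \<Rightarrow> nat \<Rightarrow> rval multiset \<Rightarrow> rval multiset \<Rightarrow> bool" where
  ls_app: "lsub_t s x V1 s' \<Longrightarrow> lsub_t t x V2 t' \<Longrightarrow> lsub_t (App s t) x (V1 + V2) (App s' t')"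
| ls_bag: "lsub_b B x V B' \<Longrightarrow> lsub_t (Bag B) x V (Bag B')"
| ls_var_eq: "lsub_v (Var x) x {#v#} v"
| ls_var_lt: "y < x \<Longrightarrow> lsub_v (Var y) x {#} (Var y)"
| ls_var_gt: "x < y \<Longrightarrow> lsub_v (Var y) x {#} (Var (y - 1))"
| ls_lam: "lsub_t t (Suc x) (image_mset (lift_v 0) V) t' \<Longrightarrow> lsub_v (Lam t) x V (Lam t')"
| ls_empty: "lsub_b {#} x {#} {#}"
| ls_add: "lsub_v u x V1 u' \<Longrightarrow> lsub_b B x V2 B' \<Longrightarrow>
            lsub_b (add_mset u B) x (V1 + V2) (add_mset u' B')"

text \<open>t<0 := v1,...,vn> for the body t of an abstraction.\<close>
definition linsubst :: "rterm \<Rightarrow> rval multiset \<Rightarrow> rterm set" where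
  "linsubst t V = {t'. lsub_t t 0 V t'}"

inductive red_t :: "rterm \<Rightarrow> rterm set \<Rightarrow> bool"
  and red_v :: "rval \<Rightarrow> rval set \<Rightarrow> bool" where
  r_beta: "red_t (App (Bag {#Lam t#}) (Bag V)) (linsubst t V)"
| r_zero: "size B \<noteq> 1 \<Longrightarrow> red_t (App (Bag B) t) {}"
| r_sigma1: "red_t (App (App (Bag {#Lam t#}) s1) s2)
                   {App (Bag {#Lam (App t (lift_t 0 s2))#}) s1}"
| r_sigma3: "red_t (App (Bag {#v#}) (App (Bag {#Lam t#}) s))
                   {App (Bag {#Lam (App (Bag {#lift_v 0 v#}) t)#}) s}"
| r_appL: "red_t s S \<Longrightarrow> red_t (App s t) ((\<lambda>s'. App s' t) ` S)"
| r_appR: "red_t t T \<Longrightarrow> red_t (App s t) ((\<lambda>t'. App s t') ` T)"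
| r_bag: "red_v v W \<Longrightarrow> red_t (Bag (add_mset v B)) ((\<lambda>w. Bag (add_mset w B)) ` W)"
| r_lam: "red_t t T \<Longrightarrow> red_v (Lam t) (Lam ` T)"

definition red_set :: "rterm set \<Rightarrow> rterm set \<Rightarrow> bool" where
  "red_set A B \<longleftrightarrow> (\<exists>e E1 E2. red_t e E1 \<and> e \<notin> E2 \<and> finite E2 \<and>
                        A = insert e E2 \<and> B = E1 \<union> E2)"

definition normal_set :: "rterm set \<Rightarrow> bool" where
  "normal_set F \<longleftrightarrow> (\<nexists>G. red_set F G)"

definition nf :: "rterm \<Rightarrow> rterm set" where
  "nf e = (THE F. red_set\<^sup>*\<^sup>* {e} F \<and> normal_set F)"

definition NF :: "rterm set \<Rightarrow> rterm set" where
  "NF E = (\<Union>e\<in>E. nf e)"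

primrec taylor :: "lterm \<Rightarrow> rterm set" where
  "taylor (LVar x) = {Bag (replicate_mset n (Var x)) | n. True}"
| "taylor (LLam N) = {Bag B | B. set_mset B \<subseteq> Lam ` taylor N}"
| "taylor (LApp P Q) = {App s t | s t. s \<in> taylor P \<and> t \<in> taylor Q}"

end

theory Submission
  imports Defs
begin

text \<open>Every simple term has a unique normal form, and the normal form of a compound term
  is obtained by normalising its components first:
  \<open>nf (s t) = \<Union>{nf (s' t') | s' \<in> nf s, t' \<in> nf t}\<close> and
  \<open>nf [\<lambda>x.u, v\<^sub>1, \<dots>] = \<Union>{nf [\<lambda>x.u', v\<^sub>1, \<dots>] | u' \<in> nf u}\<close>.
  Since the Taylor expansions of \<open>\<lambda>x.N\<close> and \<open>P Q\<close> are assembled from those of \<open>N\<close>, \<open>P\<close>,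
  \<open>Q\<close> with exactly these two constructors, \<open>NF (\<T>(C[M]))\<close> depends on \<open>M\<close> only through
  \<open>NF (\<T>(M))\<close>, for any context \<open>C\<close> built from abstractions and applications.

  Existence and uniqueness of normal forms follow Newman's lemma: every reduction step decreases
  a well-founded measure (the size, or at equal size the nesting of applications under
  abstractions, which the \<open>\<sigma>\<close>-rules increase), and by well-founded induction along this
  measure all one-step reducts of a term have the same normal forms.  Local confluence is a
  critical-pair analysis; the \<open>\<beta>\<^sub>r\<close> cases rest on the commutation of reduction with linear
  substitution.\<close>

lemma rterm_rval_induct[case_names App Bag Var Lam]:
  assumes "\<And>x1 x2. P1 x1 \<Longrightarrow> P1 x2 \<Longrightarrow> P1 (App x1 x2)"
    and "\<And>x. (\<And>xa. xa \<in># x \<Longrightarrow> P2 xa) \<Longrightarrow> P1 (Bag x)"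
    and "\<And>x. P2 (Var x)" and "\<And>x. P1 x \<Longrightarrow> P2 (Lam x)"
  shows "P1 t" and "P2 v"
  using rterm_rval.induct[of P1 P2 t v] assms by auto

lemma rterm_rval_add_induct[case_names App Empty Add Var Lam]:
  assumes "\<And>s t. P1 s \<Longrightarrow> P1 t \<Longrightarrow> P1 (App s t)"
    and "P1 (Bag {#})"
    and "\<And>u B. P2 u \<Longrightarrow> P1 (Bag B) \<Longrightarrow> P1 (Bag (add_mset u B))"
    and "\<And>x. P2 (Var x)" and "\<And>t. P1 t \<Longrightarrow> P2 (Lam t)"
  shows "P1 t" and "P2 v"
proof (induction t and v rule: rterm_rval_induct)
  case (Bag B)
  then show ?case by (induction B) (use assms in auto)
qed (use assms in auto)

section \<open>Termination measures\<close>

primrec tsize :: "rterm \<Rightarrow> nat" and vsize :: "rval \<Rightarrow> nat" where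
  "tsize (App s t) = tsize s + tsize t + 1"
| "tsize (Bag B) = 1 + sum_mset (image_mset vsize B)"
| "vsize (Var x) = 1"
| "vsize (Lam t) = tsize t + 1"

primrec tapps :: "rterm \<Rightarrow> nat" and vapps :: "rval \<Rightarrow> nat" where
  "tapps (App s t) = tapps s + tapps t + 1"
| "tapps (Bag B) = sum_mset (image_mset vapps B)"
| "vapps (Var x) = 0"
| "vapps (Lam t) = tapps t"

text \<open>\<open>tdepth t\<close> sums, over all applications in \<open>t\<close>, the number of abstractions above them.\<close>

primrec tdepth :: "rterm \<Rightarrow> nat" and vdepth :: "rval \<Rightarrow> nat" where
  "tdepth (App s t) = tdepth s + tdepth t"
| "tdepth (Bag B) = sum_mset (image_mset vdepth B)"
| "vdepth (Var x) = 0"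
| "vdepth (Lam t) = tdepth t + tapps t"

lemma apps_le_size: "tapps t \<le> tsize t" "vapps v \<le> vsize v"
proof (induction t and v rule: rterm_rval_induct)
  case (Bag x)
  then show ?case using sum_mset_mono[of x vapps vsize] by auto
qed auto

lemma depth_le_size_sq: "tdepth t \<le> tsize t * tsize t" "vdepth v \<le> vsize v * vsize v"
proof (induction t and v rule: rterm_rval_induct)
  case (App x1 x2)
  then show ?case by (simp add: algebra_simps)
next
  case (Bag B)
  then show ?case
  proof (induction B)
    case empty
    then show ?case by simp
  next
    case (add x B)
    have a: "vdepth x \<le> vsize x * vsize x" using add by simp
    have b: "tdepth (Bag B) \<le> tsize (Bag B) * tsize (Bag B)" using add by simp
    have "tdepth (Bag (add_mset x B)) = vdepth x + tdepth (Bag B)" by simp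
    also have "\<dots> \<le> vsize x * vsize x + tsize (Bag B) * tsize (Bag B)" using a b by simp
    also have "\<dots> \<le> (vsize x + tsize (Bag B)) * (vsize x + tsize (Bag B))" by (simp add: algebra_simps)
    also have "vsize x + tsize (Bag B) = tsize (Bag (add_mset x B))" by simp
    finally show ?case .
  qed
next
  case (Lam x)
  then show ?case using apps_le_size(1)[of x] by (simp add: algebra_simps)
qed auto

lemma lift_measures: "tsize (lift_t k t) = tsize t \<and> tapps (lift_t k t) = tapps t \<and> tdepth (lift_t k t) = tdepth t"
  "vsize (lift_v k v) = vsize v \<and> vapps (lift_v k v) = vapps v \<and> vdepth (lift_v k v) = vdepth v"
proof (induction t and v arbitrary: k and k rule: rterm_rval_induct)
  case (Bag x)
  then show ?case by (induction x) auto
qed auto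

lemma lift_lift: "k \<le> j \<Longrightarrow> lift_t (Suc j) (lift_t k t) = lift_t k (lift_t j t)"
  "k \<le> j \<Longrightarrow> lift_v (Suc j) (lift_v k v) = lift_v k (lift_v j v)"
proof (induction t and v arbitrary: k j and k j rule: rterm_rval_induct)
  case (Bag x)
  then show ?case by (auto simp: multiset.map_comp intro!: multiset.map_cong0)
qed auto

section \<open>Linear substitution\<close>

lemmas ls_induct = lsub_t_lsub_v_lsub_b.inducts

lemma lsub_b_empty_iff: "lsub_b {#} x V B' \<longleftrightarrow> V = {#} \<and> B' = {#}"
  by (auto elim: lsub_b.cases intro: ls_empty)

lemma lsub_b_result_empty_iff: "lsub_b B x V {#} \<longleftrightarrow> V = {#} \<and> B = {#}"
  by (auto elim: lsub_b.cases intro: ls_empty)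

lemma lsub_b_memD:
  "lsub_b C x V B' \<Longrightarrow> u \<in># C \<Longrightarrow> \<exists>V1 V2 u' B''. V = V1+V2 \<and> B' = add_mset u' B'' \<and>
      lsub_v u x V1 u' \<and> lsub_b (C - {#u#}) x V2 B''"
proof (induction rule: ls_induct(3)[where ?P1.0="\<lambda>_ _ _ _. True" and ?P2.0="\<lambda>_ _ _ _. True"])
  case (ls_add w x W1 w' B W2 B0')
  show ?case
  proof (cases "u = w")
    case True
    then show ?thesis using ls_add by force
  next
    case False
    then have "u \<in># B" using ls_add by auto
    then obtain V1 V2 u' B1 where h: "W2 = V1+V2" "B0' = add_mset u' B1" "lsub_v u x V1 u'"
       "lsub_b (B - {#u#}) x V2 B1" using ls_add by blast
    have "lsub_b (add_mset w (B - {#u#})) x (W1 + V2) (add_mset w' B1)"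
      by (rule lsub_t_lsub_v_lsub_b.ls_add) (use ls_add h in auto)
    moreover have "add_mset w (B - {#u#}) = add_mset w B - {#u#}" using False by simp
    ultimately show ?thesis using h
      by (intro exI[of _ V1] exI[of _ "W1+V2"] exI[of _ u'] exI[of _ "add_mset w' B1"]) auto
  qed
qed auto

lemma lsub_b_add_iff: "lsub_b (add_mset u B) x V B' \<longleftrightarrow>
   (\<exists>V1 V2 u' B''. V = V1+V2 \<and> B' = add_mset u' B'' \<and> lsub_v u x V1 u' \<and> lsub_b B x V2 B'')"
  using lsub_b_memD[of "add_mset u B" x V B' u] by (auto intro: ls_add)

lemma lsub_b_mem_resultD:
  "lsub_b C x V B' \<Longrightarrow> u' \<in># B' \<Longrightarrow> \<exists>V1 V2 u C0. V = V1+V2 \<and> C = add_mset u C0 \<and>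
      lsub_v u x V1 u' \<and> lsub_b C0 x V2 (B' - {#u'#})"
proof (induction rule: ls_induct(3)[where ?P1.0="\<lambda>_ _ _ _. True" and ?P2.0="\<lambda>_ _ _ _. True"])
  case (ls_add w x W1 w' B W2 B0')
  show ?case
  proof (cases "u' = w'")
    case True
    then show ?thesis using ls_add by force
  next
    case False
    then have "u' \<in># B0'" using ls_add by auto
    then obtain V1 V2 u C0 where h: "W2 = V1+V2" "B = add_mset u C0" "lsub_v u x V1 u'"
       "lsub_b C0 x V2 (B0' - {#u'#})" using ls_add by blast
    have "lsub_b (add_mset w C0) x (W1 + V2) (add_mset w' (B0' - {#u'#}))"
      by (rule lsub_t_lsub_v_lsub_b.ls_add) (use ls_add h in auto)
    moreover have "add_mset w' (B0' - {#u'#}) = add_mset w' B0' - {#u'#}" using False by simp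
    ultimately show ?thesis using h
      by (intro exI[of _ V1] exI[of _ "W1+V2"] exI[of _ u] exI[of _ "add_mset w C0"]) auto
  qed
qed auto

lemma lsub_b_result_add_iff: "lsub_b C x V (add_mset u' B') \<longleftrightarrow>
   (\<exists>V1 V2 u C0. V = V1+V2 \<and> C = add_mset u C0 \<and> lsub_v u x V1 u' \<and> lsub_b C0 x V2 B')"
  using lsub_b_mem_resultD[of C x V "add_mset u' B'" u'] by (auto intro: ls_add)

lemma lsub_b_plus_iff: "lsub_b (B1 + B2) x V B' \<longleftrightarrow>
   (\<exists>V1 V2 B1' B2'. V = V1+V2 \<and> B' = B1'+B2' \<and> lsub_b B1 x V1 B1' \<and> lsub_b B2 x V2 B2')"
proof (induction B1 arbitrary: V B')
  case empty
  then show ?case by (auto simp: lsub_b_empty_iff)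
next
  case (add u B1)
  have e: "add_mset u B1 + B2 = add_mset u (B1 + B2)" by simp
  show ?case
  proof
    assume "lsub_b (add_mset u B1 + B2) x V B'"
    then obtain V1 V2 u' B'' where h: "V = V1+V2" "B' = add_mset u' B''" "lsub_v u x V1 u'"
      "lsub_b (B1 + B2) x V2 B''" unfolding e lsub_b_add_iff by blast
    then obtain W1 W2 C1 C2 where g: "V2 = W1+W2" "B'' = C1+C2" "lsub_b B1 x W1 C1" "lsub_b B2 x W2 C2"
      using add by blast
    have "lsub_b (add_mset u B1) x (V1+W1) (add_mset u' C1)" using h g by (auto intro: ls_add)
    then show "\<exists>V1 V2 B1' B2'. V = V1+V2 \<and> B' = B1'+B2' \<and> lsub_b (add_mset u B1) x V1 B1' \<and> lsub_b B2 x V2 B2'"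
      using h g by (intro exI[of _ "V1+W1"] exI[of _ W2] exI[of _ "add_mset u' C1"] exI[of _ C2]) (auto simp: add.assoc)
  next
    assume "\<exists>V1 V2 B1' B2'. V = V1+V2 \<and> B' = B1'+B2' \<and> lsub_b (add_mset u B1) x V1 B1' \<and> lsub_b B2 x V2 B2'"
    then obtain V1 V2 B1' B2' where h: "V = V1+V2" "B' = B1'+B2'" "lsub_b (add_mset u B1) x V1 B1'" "lsub_b B2 x V2 B2'"
      by blast
    then obtain W1 W2 u' C where g: "V1 = W1+W2" "B1' = add_mset u' C" "lsub_v u x W1 u'" "lsub_b B1 x W2 C"
      unfolding lsub_b_add_iff by blast
    have "lsub_b (B1+B2) x (W2+V2) (C+B2')" using add g h by blast
    then show "lsub_b (add_mset u B1 + B2) x V B'" unfolding e using h g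
      by (metis ls_add add.assoc union_mset_add_mset_left)
  qed
qed

lemma lsub_b_result_plus_iff: "lsub_b B x V (C1 + C2) \<longleftrightarrow>
   (\<exists>V1 V2 B1 B2. V = V1+V2 \<and> B = B1+B2 \<and> lsub_b B1 x V1 C1 \<and> lsub_b B2 x V2 C2)"
proof (induction C1 arbitrary: V B)
  case empty
  then show ?case by (auto simp: lsub_b_result_empty_iff)
next
  case (add u' C1)
  have e: "add_mset u' C1 + C2 = add_mset u' (C1 + C2)" by simp
  show ?case
  proof
    assume "lsub_b B x V (add_mset u' C1 + C2)"
    then obtain V1 V2 u B0 where h: "V = V1+V2" "B = add_mset u B0" "lsub_v u x V1 u'"
      "lsub_b B0 x V2 (C1 + C2)" unfolding e lsub_b_result_add_iff by blast
    then obtain W1 W2 D1 D2 where g: "V2 = W1+W2" "B0 = D1+D2" "lsub_b D1 x W1 C1" "lsub_b D2 x W2 C2"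
      using add by blast
    have "lsub_b (add_mset u D1) x (V1+W1) (add_mset u' C1)" using h g by (auto intro: ls_add)
    then show "\<exists>V1 V2 B1 B2. V = V1+V2 \<and> B = B1+B2 \<and> lsub_b B1 x V1 (add_mset u' C1) \<and> lsub_b B2 x V2 C2"
      using h g by (intro exI[of _ "V1+W1"] exI[of _ W2] exI[of _ "add_mset u D1"] exI[of _ D2]) (auto simp: add.assoc)
  next
    assume "\<exists>V1 V2 B1 B2. V = V1+V2 \<and> B = B1+B2 \<and> lsub_b B1 x V1 (add_mset u' C1) \<and> lsub_b B2 x V2 C2"
    then obtain V1 V2 B1 B2 where h: "V = V1+V2" "B = B1+B2" "lsub_b B1 x V1 (add_mset u' C1)" "lsub_b B2 x V2 C2"
      by blast
    then obtain W1 W2 u D where g: "V1 = W1+W2" "B1 = add_mset u D" "lsub_v u x W1 u'" "lsub_b D x W2 C1"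
      unfolding lsub_b_result_add_iff by blast
    have "lsub_b (D+B2) x (W2+V2) (C1+C2)" using add g h by blast
    then have "lsub_b (add_mset u (D+B2)) x (W1+(W2+V2)) (add_mset u' (C1+C2))" using g by (auto intro: ls_add)
    then show "lsub_b B x V (add_mset u' C1 + C2)" using h g by (simp add: add.assoc)
  qed
qed

lemma lsub_b_single_iff: "lsub_b {#u#} x V B' \<longleftrightarrow> (\<exists>u'. B' = {#u'#} \<and> lsub_v u x V u')"
  by (auto simp: lsub_b_add_iff lsub_b_empty_iff)

lemma lsub_t_App_iff: "lsub_t (App s t) x V r \<longleftrightarrow>
   (\<exists>V1 V2 s' t'. V = V1+V2 \<and> r = App s' t' \<and> lsub_t s x V1 s' \<and> lsub_t t x V2 t')"
proof
  assume "lsub_t (App s t) x V r" then show "\<exists>V1 V2 s' t'. V = V1+V2 \<and> r = App s' t' \<and> lsub_t s x V1 s' \<and> lsub_t t x V2 t'"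
    by (cases rule: lsub_t.cases) auto
qed (auto intro: ls_app)

lemma lsub_t_Bag_iff: "lsub_t (Bag B) x V r \<longleftrightarrow> (\<exists>B'. r = Bag B' \<and> lsub_b B x V B')"
  by (auto elim: lsub_t.cases intro: ls_bag)

lemma lsub_t_Bag_add_mset_iff: "lsub_t (Bag (add_mset u B)) x V r \<longleftrightarrow>
   (\<exists>V1 V2 u' B'. V = V1+V2 \<and> r = Bag (add_mset u' B') \<and> lsub_v u x V1 u' \<and> lsub_t (Bag B) x V2 (Bag B'))"
  by (simp add: lsub_t_Bag_iff lsub_b_add_iff) blast

lemma lsub_t_Bag_add_msetI:
  "lsub_v u x V1 u' \<Longrightarrow> lsub_t (Bag B) x V2 (Bag B') \<Longrightarrow>
   lsub_t (Bag (add_mset u B)) x (V1 + V2) (Bag (add_mset u' B'))"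
  by (auto simp: lsub_t_Bag_iff intro: ls_add)

lemma lsub_v_Var_iff: "lsub_v (Var y) x V r \<longleftrightarrow>
   (y = x \<and> (\<exists>v. V = {#v#} \<and> r = v)) \<or> (y < x \<and> V = {#} \<and> r = Var y) \<or>
   (x < y \<and> V = {#} \<and> r = Var (y-1))"
  by (auto elim: lsub_v.cases intro: ls_var_eq ls_var_lt ls_var_gt[simplified])

lemma lsub_v_Lam_iff: "lsub_v (Lam t) x V r \<longleftrightarrow>
   (\<exists>t'. r = Lam t' \<and> lsub_t t (Suc x) (image_mset (lift_v 0) V) t')"
  by (auto elim: lsub_v.cases intro: ls_lam)

lemma lsub_size:
  "lsub_t t x V r \<Longrightarrow> tsize r + size V = tsize t + sum_mset (image_mset vsize V)"
  "lsub_v v x V w \<Longrightarrow> vsize w + size V = vsize v + sum_mset (image_mset vsize V)"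
  "lsub_b B x V B' \<Longrightarrow> sum_mset (image_mset vsize B') + size V =
      sum_mset (image_mset vsize B) + sum_mset (image_mset vsize V)"
proof (induction rule: ls_induct)
  case (ls_lam t x V t')
  then show ?case by (simp add: image_mset.compositionality o_def lift_measures)
qed auto

lemma lsub_b_size_eq: "lsub_b B x V B' \<Longrightarrow> size B' = size B"
  by (induction rule: ls_induct(3)[where ?P1.0="\<lambda>_ _ _ _. True" and ?P2.0="\<lambda>_ _ _ _. True"]) auto

lemma image_mset_lift_v_commute: "image_mset (lift_v (Suc k)) (image_mset (lift_v 0) V) =
   image_mset (lift_v 0) (image_mset (lift_v k) V)"
  by (simp add: multiset.map_comp o_def lift_lift(2)[of 0 k, simplified])

lemma image_mset_eq_single: "image_mset f V = {#w#} \<longleftrightarrow> (\<exists>v. V = {#v#} \<and> w = f v)"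
proof
  assume a: "image_mset f V = {#w#}"
  then have "size V = 1" by (metis size_image_mset size_single)
  then obtain v where "V = {#v#}" by (meson size_1_singleton_mset)
  then show "\<exists>v. V = {#v#} \<and> w = f v" using a by auto
qed auto

lemma lsub_lift_below:
  "lsub_t t x V r \<Longrightarrow> k \<le> x \<Longrightarrow> lsub_t (lift_t k t) (Suc x) (image_mset (lift_v k) V) (lift_t k r)"
  "lsub_v v x V w \<Longrightarrow> k \<le> x \<Longrightarrow> lsub_v (lift_v k v) (Suc x) (image_mset (lift_v k) V) (lift_v k w)"
  "lsub_b B x V B' \<Longrightarrow> k \<le> x \<Longrightarrow> lsub_b (image_mset (lift_v k) B) (Suc x) (image_mset (lift_v k) V) (image_mset (lift_v k) B')"
  by (induction arbitrary: k and k and k rule: ls_induct)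
    (auto intro: lsub_t_lsub_v_lsub_b.intros simp: lsub_v_Var_iff lsub_v_Lam_iff image_mset_lift_v_commute[symmetric])

lemma lsub_lift_above:
  "lsub_t t x V r \<Longrightarrow> x \<le> k \<Longrightarrow> lsub_t (lift_t (Suc k) t) x (image_mset (lift_v k) V) (lift_t k r)"
  "lsub_v v x V w \<Longrightarrow> x \<le> k \<Longrightarrow> lsub_v (lift_v (Suc k) v) x (image_mset (lift_v k) V) (lift_v k w)"
  "lsub_b B x V B' \<Longrightarrow> x \<le> k \<Longrightarrow> lsub_b (image_mset (lift_v (Suc k)) B) x (image_mset (lift_v k) V) (image_mset (lift_v k) B')"
  by (induction arbitrary: k and k and k rule: ls_induct)
    (auto intro: lsub_t_lsub_v_lsub_b.intros simp: lsub_v_Var_iff lsub_v_Lam_iff image_mset_lift_v_commute[symmetric])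

lemma lsub_lift_below_inv:
  "\<And>k x V r'. lsub_t (lift_t k t) (Suc x) (image_mset (lift_v k) V) r' \<Longrightarrow> k \<le> x \<Longrightarrow>
     \<exists>r. r' = lift_t k r \<and> lsub_t t x V r"
  "\<And>k x V r'. lsub_v (lift_v k v) (Suc x) (image_mset (lift_v k) V) r' \<Longrightarrow> k \<le> x \<Longrightarrow>
     \<exists>r. r' = lift_v k r \<and> lsub_v v x V r"
proof (induction t and v rule: rterm_rval_add_induct)
  case (App s t)
  from App.prems obtain V1 V2 s' t' where h: "image_mset (lift_v k) V = V1 + V2" "r' = App s' t'"
    "lsub_t (lift_t k s) (Suc x) V1 s'" "lsub_t (lift_t k t) (Suc x) V2 t'" by (auto simp: lsub_t_App_iff)
  then obtain A1 A2 where a: "V = A1 + A2" "V1 = image_mset (lift_v k) A1" "V2 = image_mset (lift_v k) A2"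
    by (meson image_mset_eq_plusD)
  obtain s0 where "s' = lift_t k s0" "lsub_t s x A1 s0" using App.IH(1) h a App.prems by blast
  moreover obtain t0 where "t' = lift_t k t0" "lsub_t t x A2 t0" using App.IH(2) h a App.prems by blast
  ultimately show ?case using h a by (intro exI[of _ "App s0 t0"]) (simp add: ls_app)
next
  case (Add u B)
  from Add.prems obtain V1 V2 u' B' where h: "image_mset (lift_v k) V = V1 + V2" "r' = Bag (add_mset u' B')"
    "lsub_v (lift_v k u) (Suc x) V1 u'" "lsub_t (lift_t k (Bag B)) (Suc x) V2 (Bag B')"
    by (auto simp: lsub_t_Bag_add_mset_iff)
  then obtain A1 A2 where a: "V = A1 + A2" "V1 = image_mset (lift_v k) A1" "V2 = image_mset (lift_v k) A2"
    by (meson image_mset_eq_plusD)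
  obtain u0 where "u' = lift_v k u0" "lsub_v u x A1 u0" using Add.IH(1) h a Add.prems by blast
  moreover obtain B0 where "B' = image_mset (lift_v k) B0" "lsub_b B x A2 B0"
    using Add.IH(2)[OF h(4)[unfolded a]] Add.prems by (auto simp: lsub_t_Bag_iff)
  ultimately show ?case using h a by (intro exI[of _ "Bag (add_mset u0 B0)"]) (simp add: lsub_t_Bag_iff ls_add)
next
  case (Var y)
  consider "y = x" | "y < x" | "x < y" by arith
  then show ?case
  proof cases
    case 1
    then obtain w where "image_mset (lift_v k) V = {#w#}" "r' = w" using Var by (auto simp: lsub_v_Var_iff)
    then show ?thesis using 1 by (auto simp: lsub_v_Var_iff image_mset_eq_single)
  next
    case 2
    then show ?thesis using Var by (intro exI[of _ "Var y"]) (auto simp: lsub_v_Var_iff split: if_splits)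
  next
    case 3
    then show ?thesis using Var by (intro exI[of _ "Var (y - 1)"]) (auto simp: lsub_v_Var_iff split: if_splits)
  qed
next
  case (Lam t)
  from Lam.prems obtain t'' where h: "r' = Lam t''"
    "lsub_t (lift_t (Suc k) t) (Suc (Suc x)) (image_mset (lift_v (Suc k)) (image_mset (lift_v 0) V)) t''"
    by (auto simp: lsub_v_Lam_iff image_mset_lift_v_commute)
  then obtain t0 where "t'' = lift_t (Suc k) t0" "lsub_t t (Suc x) (image_mset (lift_v 0) V) t0"
    using Lam.IH[OF h(2)] Lam.prems by auto
  then show ?case using h by (intro exI[of _ "Lam t0"]) (simp add: lsub_v_Lam_iff)
qed (auto simp: lsub_t_Bag_iff lsub_b_empty_iff)


lemma lsub_lift_above_inv:
  "\<And>k x V r'. lsub_t (lift_t (Suc k) t) x (image_mset (lift_v k) V) r' \<Longrightarrow> x \<le> k \<Longrightarrow>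
     \<exists>r. r' = lift_t k r \<and> lsub_t t x V r"
  "\<And>k x V r'. lsub_v (lift_v (Suc k) v) x (image_mset (lift_v k) V) r' \<Longrightarrow> x \<le> k \<Longrightarrow>
     \<exists>r. r' = lift_v k r \<and> lsub_v v x V r"
proof (induction t and v rule: rterm_rval_add_induct)
  case (App s t)
  from App.prems obtain V1 V2 s' t' where h: "image_mset (lift_v k) V = V1 + V2" "r' = App s' t'"
    "lsub_t (lift_t (Suc k) s) x V1 s'" "lsub_t (lift_t (Suc k) t) x V2 t'" by (auto simp: lsub_t_App_iff)
  then obtain A1 A2 where a: "V = A1 + A2" "V1 = image_mset (lift_v k) A1" "V2 = image_mset (lift_v k) A2"
    by (meson image_mset_eq_plusD)
  obtain s0 where "s' = lift_t k s0" "lsub_t s x A1 s0" using App.IH(1) h a App.prems by blast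
  moreover obtain t0 where "t' = lift_t k t0" "lsub_t t x A2 t0" using App.IH(2) h a App.prems by blast
  ultimately show ?case using h a by (intro exI[of _ "App s0 t0"]) (simp add: ls_app)
next
  case (Add u B)
  from Add.prems obtain V1 V2 u' B' where h: "image_mset (lift_v k) V = V1 + V2" "r' = Bag (add_mset u' B')"
    "lsub_v (lift_v (Suc k) u) x V1 u'" "lsub_t (lift_t (Suc k) (Bag B)) x V2 (Bag B')"
    by (auto simp: lsub_t_Bag_add_mset_iff)
  then obtain A1 A2 where a: "V = A1 + A2" "V1 = image_mset (lift_v k) A1" "V2 = image_mset (lift_v k) A2"
    by (meson image_mset_eq_plusD)
  obtain u0 where "u' = lift_v k u0" "lsub_v u x A1 u0" using Add.IH(1) h a Add.prems by blast
  moreover obtain B0 where "B' = image_mset (lift_v k) B0" "lsub_b B x A2 B0"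
    using Add.IH(2)[OF h(4)[unfolded a]] Add.prems by (auto simp: lsub_t_Bag_iff)
  ultimately show ?case using h a by (intro exI[of _ "Bag (add_mset u0 B0)"]) (simp add: lsub_t_Bag_iff ls_add)
next
  case (Var y)
  consider "y = x" | "y < x" | "x < y" by arith
  then show ?case
  proof cases
    case 1
    then obtain w where "image_mset (lift_v k) V = {#w#}" "r' = w" using Var by (auto simp: lsub_v_Var_iff)
    then show ?thesis using 1 by (auto simp: lsub_v_Var_iff image_mset_eq_single)
  next
    case 2
    then show ?thesis using Var by (intro exI[of _ "Var y"]) (auto simp: lsub_v_Var_iff split: if_splits)
  next
    case 3
    then show ?thesis using Var by (intro exI[of _ "Var (y - 1)"]) (auto simp: lsub_v_Var_iff split: if_splits)
  qed
next
  case (Lam t)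
  from Lam.prems obtain t'' where h: "r' = Lam t''"
    "lsub_t (lift_t (Suc (Suc k)) t) (Suc x) (image_mset (lift_v (Suc k)) (image_mset (lift_v 0) V)) t''"
    by (auto simp: lsub_v_Lam_iff image_mset_lift_v_commute)
  then obtain t0 where "t'' = lift_t (Suc k) t0" "lsub_t t (Suc x) (image_mset (lift_v 0) V) t0"
    using Lam.IH[OF h(2)] Lam.prems by auto
  then show ?case using h by (intro exI[of _ "Lam t0"]) (simp add: lsub_v_Lam_iff)
qed (auto simp: lsub_t_Bag_iff lsub_b_empty_iff)


lemma lsub_lift_fresh:
  "\<And>x V r. lsub_t (lift_t x s) x V r \<longleftrightarrow> V = {#} \<and> r = s"
  "\<And>x V r. lsub_v (lift_v x v) x V r \<longleftrightarrow> V = {#} \<and> r = v"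
proof (induction s and v rule: rterm_rval_add_induct)
  case (Add u B)
  then show ?case by (fastforce simp: lsub_t_Bag_add_mset_iff)
qed (auto simp: lsub_t_App_iff lsub_t_Bag_iff lsub_b_empty_iff lsub_v_Var_iff lsub_v_Lam_iff)

lemma lsub_b_lift_below_inv:
  assumes "lsub_b (image_mset (lift_v k) B) (Suc x) (image_mset (lift_v k) V) B''" "k \<le> x"
  shows "\<exists>B'. B'' = image_mset (lift_v k) B' \<and> lsub_b B x V B'"
proof -
  have "lsub_t (lift_t k (Bag B)) (Suc x) (image_mset (lift_v k) V) (Bag B'')"
    using assms by (simp add: lsub_t_Bag_iff)
  then obtain r where "Bag B'' = lift_t k r" "lsub_t (Bag B) x V r" using lsub_lift_below_inv(1) assms(2) by blast
  then show ?thesis by (auto simp: lsub_t_Bag_iff)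
qed

lemma lsub_lsub_commute_Var:
  assumes "lsub_v (Var y) (Suc i) (image_mset (lift_v j) V1) u_r" "j \<le> i"
    "lsub_b W i V2 W_r" "lsub_v u_r j W_r r'"
  shows "\<exists>u'. lsub_v (Var y) j W u' \<and> lsub_v u' i (V1+V2) r'"
proof -
  consider "y = Suc i" | "y = j" | "y < j" | "j < y" "y < Suc i" | "Suc i < y" using assms(2) by arith
  then show ?thesis
  proof cases
    case 1
    from assms(1) 1 obtain v where v: "V1 = {#v#}" "u_r = lift_v j v"
      by (auto simp: lsub_v_Var_iff image_mset_eq_single)
    with assms(4) have "W_r = {#}" "r' = v" using lsub_lift_fresh(2) by auto
    with assms(3) have "W = {#}" "V2 = {#}" by (auto simp: lsub_b_result_empty_iff)
    show ?thesis using 1 v \<open>W = {#}\<close> \<open>V2 = {#}\<close> \<open>r' = v\<close> assms(2)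
      by (intro exI[of _ "Var i"]) (auto simp: lsub_v_Var_iff)
  next
    case 2
    from assms(1) 2 assms(2) have "V1 = {#}" "u_r = Var j" by (auto simp: lsub_v_Var_iff)
    with assms(4) have "W_r = {#r'#}" by (auto simp: lsub_v_Var_iff)
    with assms(3) obtain w where "W = {#w#}" "lsub_v w i V2 r'"
      by (auto simp: lsub_b_result_add_iff lsub_b_result_empty_iff)
    then show ?thesis using 2 \<open>V1 = {#}\<close> by (intro exI[of _ w]) (auto simp: lsub_v_Var_iff)
  next
    case 3
    from assms(1) 3 assms(2) have "V1 = {#}" "u_r = Var y" by (auto simp: lsub_v_Var_iff)
    with assms(4) 3 have "W_r = {#}" "r' = Var y" by (auto simp: lsub_v_Var_iff)
    with assms(3) have "W = {#}" "V2 = {#}" by (auto simp: lsub_b_result_empty_iff)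
    then show ?thesis using 3 assms(2) \<open>V1 = {#}\<close> \<open>r' = Var y\<close>
      by (intro exI[of _ "Var y"]) (auto simp: lsub_v_Var_iff)
  next
    case 4
    from assms(1) 4 have "V1 = {#}" "u_r = Var y" by (auto simp: lsub_v_Var_iff)
    with assms(4) 4 have "W_r = {#}" "r' = Var (y - 1)" by (auto simp: lsub_v_Var_iff)
    with assms(3) have "W = {#}" "V2 = {#}" by (auto simp: lsub_b_result_empty_iff)
    then show ?thesis using 4 assms(2) \<open>V1 = {#}\<close> \<open>r' = Var (y - 1)\<close>
      by (intro exI[of _ "Var (y - 1)"]) (auto simp: lsub_v_Var_iff)
  next
    case 5
    from assms(1) 5 have "V1 = {#}" "u_r = Var (y - 1)" by (auto simp: lsub_v_Var_iff)
    with assms(4) 5 assms(2) have "W_r = {#}" "r' = Var (y - 2)" by (auto simp: lsub_v_Var_iff)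
    with assms(3) have "W = {#}" "V2 = {#}" by (auto simp: lsub_b_result_empty_iff)
    then show ?thesis using 5 assms(2) \<open>V1 = {#}\<close> \<open>r' = Var (y - 2)\<close>
      by (intro exI[of _ "Var (y - 1)"]) (auto simp: lsub_v_Var_iff)
  qed
qed

lemma lsub_lsub_commute:
  "\<And>i j V1 V2 W W_r u_r r'. lsub_t u (Suc i) (image_mset (lift_v j) V1) u_r \<Longrightarrow> j \<le> i \<Longrightarrow>
     lsub_b W i V2 W_r \<Longrightarrow> lsub_t u_r j W_r r' \<Longrightarrow>
     \<exists>u'. lsub_t u j W u' \<and> lsub_t u' i (V1+V2) r'"
  "\<And>i j V1 V2 W W_r u_r r'. lsub_v c (Suc i) (image_mset (lift_v j) V1) u_r \<Longrightarrow> j \<le> i \<Longrightarrow>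
     lsub_b W i V2 W_r \<Longrightarrow> lsub_v u_r j W_r r' \<Longrightarrow>
     \<exists>u'. lsub_v c j W u' \<and> lsub_v u' i (V1+V2) r'"
proof (induction u and c rule: rterm_rval_add_induct)
  case (App a b)
  from App.prems(1) obtain X1 X2 a_r b_r where h1: "image_mset (lift_v j) V1 = X1 + X2" "u_r = App a_r b_r"
    "lsub_t a (Suc i) X1 a_r" "lsub_t b (Suc i) X2 b_r" by (auto simp: lsub_t_App_iff)
  then obtain V1a V1b where h2: "V1 = V1a + V1b" "X1 = image_mset (lift_v j) V1a" "X2 = image_mset (lift_v j) V1b"
    by (meson image_mset_eq_plusD)
  from App.prems(4) h1 obtain Y1 Y2 ra rb where h3: "W_r = Y1 + Y2" "r' = App ra rb"
    "lsub_t a_r j Y1 ra" "lsub_t b_r j Y2 rb" by (auto simp: lsub_t_App_iff)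
  from App.prems(3) h3 obtain Z1 Z2 Wa Wb where h4: "V2 = Z1 + Z2" "W = Wa + Wb"
    "lsub_b Wa i Z1 Y1" "lsub_b Wb i Z2 Y2" by (auto simp: lsub_b_result_plus_iff)
  obtain a' where a': "lsub_t a j Wa a'" "lsub_t a' i (V1a+Z1) ra"
    using App.IH(1)[of i j V1a a_r Wa Z1 Y1 ra] h1 h2 h3 h4 App.prems(2) by blast
  obtain b' where b': "lsub_t b j Wb b'" "lsub_t b' i (V1b+Z2) rb"
    using App.IH(2)[of i j V1b b_r Wb Z2 Y2 rb] h1 h2 h3 h4 App.prems(2) by blast
  have "lsub_t (App a b) j W (App a' b')" using a' b' h4 by (simp add: lsub_t_lsub_v_lsub_b.ls_app)
  moreover have "lsub_t (App a' b') i (V1+V2) r'"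
  proof -
    have "lsub_t (App a' b') i ((V1a+Z1)+(V1b+Z2)) (App ra rb)" using a' b' by (simp add: lsub_t_lsub_v_lsub_b.ls_app)
    moreover have "(V1a+Z1)+(V1b+Z2) = V1+V2" using h2 h4 by (simp add: ac_simps)
    ultimately show ?thesis using h3 by simp
  qed
  ultimately show ?case by blast
next
  case (Add c C)
  from Add.prems(1) obtain X1 X2 c_r C_r where h1: "image_mset (lift_v j) V1 = X1 + X2"
    "u_r = Bag (add_mset c_r C_r)" "lsub_v c (Suc i) X1 c_r" "lsub_t (Bag C) (Suc i) X2 (Bag C_r)"
    by (auto simp: lsub_t_Bag_add_mset_iff)
  then obtain V1a V1b where h2: "V1 = V1a + V1b" "X1 = image_mset (lift_v j) V1a" "X2 = image_mset (lift_v j) V1b"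
    by (meson image_mset_eq_plusD)
  from Add.prems(4) h1 obtain Y1 Y2 ra R where h3: "W_r = Y1 + Y2" "r' = Bag (add_mset ra R)"
    "lsub_v c_r j Y1 ra" "lsub_t (Bag C_r) j Y2 (Bag R)" by (auto simp: lsub_t_Bag_add_mset_iff)
  from Add.prems(3) h3 obtain Z1 Z2 Wa Wb where h4: "V2 = Z1 + Z2" "W = Wa + Wb"
    "lsub_b Wa i Z1 Y1" "lsub_b Wb i Z2 Y2" by (auto simp: lsub_b_result_plus_iff)
  obtain a' where a': "lsub_v c j Wa a'" "lsub_v a' i (V1a+Z1) ra"
    using Add.IH(1)[of i j V1a c_r Wa Z1 Y1 ra] h1 h2 h3 h4 Add.prems(2) by blast
  obtain b' where b': "lsub_t (Bag C) j Wb b'" "lsub_t b' i (V1b+Z2) (Bag R)"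
    using Add.IH(2)[of i j V1b "Bag C_r" Wb Z2 Y2 "Bag R"] h1 h2 h3 h4 Add.prems(2) by blast
  then obtain C' where "b' = Bag C'" by (auto simp: lsub_t_Bag_iff)
  have "lsub_t (Bag (add_mset c C)) j W (Bag (add_mset a' C'))"
    using a' b' h4 \<open>b' = Bag C'\<close> by (simp add: lsub_t_Bag_add_msetI)
  moreover have "lsub_t (Bag (add_mset a' C')) i ((V1a+Z1)+(V1b+Z2)) r'"
    using a' b' h3 \<open>b' = Bag C'\<close> by (simp add: lsub_t_Bag_add_msetI)
  moreover have "(V1a+Z1)+(V1b+Z2) = V1+V2" using h2 h4 by (simp add: ac_simps)
  ultimately show ?case by auto
next
  case (Var y)
  then show ?case by (rule lsub_lsub_commute_Var)
next
  case (Lam t)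
  from Lam.prems(1) obtain t_r where h1: "u_r = Lam t_r"
    "lsub_t t (Suc (Suc i)) (image_mset (lift_v (Suc j)) (image_mset (lift_v 0) V1)) t_r"
    by (auto simp: lsub_v_Lam_iff image_mset_lift_v_commute)
  from Lam.prems(4) h1 obtain r0 where h2: "r' = Lam r0" "lsub_t t_r (Suc j) (image_mset (lift_v 0) W_r) r0"
    by (auto simp: lsub_v_Lam_iff)
  have h3: "lsub_b (image_mset (lift_v 0) W) (Suc i) (image_mset (lift_v 0) V2) (image_mset (lift_v 0) W_r)"
    using lsub_lift_below(3)[OF Lam.prems(3), of 0] by simp
  obtain t' where "lsub_t t (Suc j) (image_mset (lift_v 0) W) t'"
     "lsub_t t' (Suc i) (image_mset (lift_v 0) V1 + image_mset (lift_v 0) V2) r0"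
    using Lam.IH[OF h1(2) _ h3 h2(2)] Lam.prems(2) by auto
  then show ?case using h2 by (intro exI[of _ "Lam t'"]) (simp add: lsub_v_Lam_iff)
qed (auto simp: lsub_t_Bag_iff lsub_b_empty_iff lsub_b_result_empty_iff)

lemma lsub_lsub_commute_inv_Var:
  assumes "lsub_v (Var y) j W u'" "lsub_v u' i V r'" "j \<le> i"
  shows "\<exists>V1 V2 u_r W_r. V = V1+V2 \<and> lsub_v (Var y) (Suc i) (image_mset (lift_v j) V1) u_r \<and>
    lsub_b W i V2 W_r \<and> lsub_v u_r j W_r r'"
proof -
  consider "y = j" | "y < j" | "j < y" "y = Suc i" | "j < y" "y < Suc i" | "j < y" "Suc i < y" by arith
  then show ?thesis
  proof cases
    case 1
    from assms(1) 1 obtain w where w: "W = {#w#}" "u' = w" by (auto simp: lsub_v_Var_iff)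
    show ?thesis using 1 w assms
      by (intro exI[of _ "{#}"] exI[of _ V] exI[of _ "Var j"] exI[of _ "{#r'#}"])
         (auto simp: lsub_v_Var_iff lsub_b_single_iff)
  next
    case 2
    from assms(1) 2 have "W = {#}" "u' = Var y" by (auto simp: lsub_v_Var_iff)
    with assms(2) 2 assms(3) have "V = {#}" "r' = Var y" by (auto simp: lsub_v_Var_iff)
    then show ?thesis using 2 \<open>W = {#}\<close> assms(3)
      by (intro exI[of _ "{#}"] exI[of _ "{#}"] exI[of _ "Var y"] exI[of _ "{#}"])
         (auto simp: lsub_v_Var_iff lsub_b_empty_iff)
  next
    case 3
    from assms(1) 3 have "W = {#}" "u' = Var i" by (auto simp: lsub_v_Var_iff)
    with assms(2) obtain v where "V = {#v#}" "r' = v" by (auto simp: lsub_v_Var_iff)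
    then show ?thesis using 3 \<open>W = {#}\<close>
      by (intro exI[of _ "{#v#}"] exI[of _ "{#}"] exI[of _ "lift_v j v"] exI[of _ "{#}"])
         (auto simp: lsub_v_Var_iff lsub_b_empty_iff lsub_lift_fresh)
  next
    case 4
    from assms(1) 4 have "W = {#}" "u' = Var (y - 1)" by (auto simp: lsub_v_Var_iff)
    with assms(2) 4 have "V = {#}" "r' = Var (y - 1)" by (auto simp: lsub_v_Var_iff)
    then show ?thesis using 4 \<open>W = {#}\<close>
      by (intro exI[of _ "{#}"] exI[of _ "{#}"] exI[of _ "Var y"] exI[of _ "{#}"])
         (auto simp: lsub_v_Var_iff lsub_b_empty_iff)
  next
    case 5
    from assms(1) 5 have "W = {#}" "u' = Var (y - 1)" by (auto simp: lsub_v_Var_iff)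
    with assms(2) 5 have "V = {#}" "r' = Var (y - 2)" by (auto simp: lsub_v_Var_iff)
    then show ?thesis using 5 \<open>W = {#}\<close> assms(3)
      by (intro exI[of _ "{#}"] exI[of _ "{#}"] exI[of _ "Var (y - 1)"] exI[of _ "{#}"])
         (auto simp: lsub_v_Var_iff lsub_b_empty_iff)
  qed
qed

lemma lsub_lsub_commute_inv:
  "\<And>i j W V u' r'. lsub_t u j W u' \<Longrightarrow> lsub_t u' i V r' \<Longrightarrow> j \<le> i \<Longrightarrow>
     \<exists>V1 V2 u_r W_r. V = V1+V2 \<and> lsub_t u (Suc i) (image_mset (lift_v j) V1) u_r \<and>
        lsub_b W i V2 W_r \<and> lsub_t u_r j W_r r'"
  "\<And>i j W V u' r'. lsub_v c j W u' \<Longrightarrow> lsub_v u' i V r' \<Longrightarrow> j \<le> i \<Longrightarrow>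
     \<exists>V1 V2 u_r W_r. V = V1+V2 \<and> lsub_v c (Suc i) (image_mset (lift_v j) V1) u_r \<and>
        lsub_b W i V2 W_r \<and> lsub_v u_r j W_r r'"
proof (induction u and c rule: rterm_rval_add_induct)
  case (App a b)
  from App.prems(1) obtain Wa Wb a' b' where h1: "W = Wa + Wb" "u' = App a' b'"
    "lsub_t a j Wa a'" "lsub_t b j Wb b'" by (auto simp: lsub_t_App_iff)
  from App.prems(2) h1 obtain Va Vb ra rb where h2: "V = Va + Vb" "r' = App ra rb"
    "lsub_t a' i Va ra" "lsub_t b' i Vb rb" by (auto simp: lsub_t_App_iff)
  obtain Va1 Va2 a_r Wa_r where A: "Va = Va1+Va2" "lsub_t a (Suc i) (image_mset (lift_v j) Va1) a_r"
     "lsub_b Wa i Va2 Wa_r" "lsub_t a_r j Wa_r ra"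
    using App.IH(1)[OF h1(3) h2(3) App.prems(3)] by blast
  obtain Vb1 Vb2 b_r Wb_r where B: "Vb = Vb1+Vb2" "lsub_t b (Suc i) (image_mset (lift_v j) Vb1) b_r"
     "lsub_b Wb i Vb2 Wb_r" "lsub_t b_r j Wb_r rb"
    using App.IH(2)[OF h1(4) h2(4) App.prems(3)] by blast
  have "V = (Va1+Vb1) + (Va2+Vb2)" using h2 A B by (simp add: ac_simps)
  moreover have "lsub_t (App a b) (Suc i) (image_mset (lift_v j) (Va1+Vb1)) (App a_r b_r)"
    using A B by (simp add: lsub_t_lsub_v_lsub_b.ls_app)
  moreover have "lsub_b W i (Va2+Vb2) (Wa_r + Wb_r)" using A B h1 lsub_b_plus_iff by blast
  moreover have "lsub_t (App a_r b_r) j (Wa_r + Wb_r) r'" using A B h2 by (simp add: lsub_t_lsub_v_lsub_b.ls_app)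
  ultimately show ?case by blast
next
  case (Add c C)
  from Add.prems(1) obtain Wa Wb a' C0 where h1: "W = Wa + Wb" "u' = Bag (add_mset a' C0)"
    "lsub_v c j Wa a'" "lsub_t (Bag C) j Wb (Bag C0)" by (auto simp: lsub_t_Bag_add_mset_iff)
  from Add.prems(2) h1 obtain Va Vb ra R0 where h2: "V = Va + Vb" "r' = Bag (add_mset ra R0)"
    "lsub_v a' i Va ra" "lsub_t (Bag C0) i Vb (Bag R0)" by (auto simp: lsub_t_Bag_add_mset_iff)
  obtain Va1 Va2 a_r Wa_r where A: "Va = Va1+Va2" "lsub_v c (Suc i) (image_mset (lift_v j) Va1) a_r"
     "lsub_b Wa i Va2 Wa_r" "lsub_v a_r j Wa_r ra"
    using Add.IH(1)[OF h1(3) h2(3) Add.prems(3)] by blast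
  obtain Vb1 Vb2 b_r Wb_r where B: "Vb = Vb1+Vb2" "lsub_t (Bag C) (Suc i) (image_mset (lift_v j) Vb1) b_r"
     "lsub_b Wb i Vb2 Wb_r" "lsub_t b_r j Wb_r (Bag R0)"
    using Add.IH(2)[OF h1(4) h2(4) Add.prems(3)] by blast
  then obtain B_r where b_r: "b_r = Bag B_r" by (auto simp: lsub_t_Bag_iff)
  have "V = (Va1+Vb1) + (Va2+Vb2)" using h2 A B by (simp add: ac_simps)
  moreover have "lsub_t (Bag (add_mset c C)) (Suc i) (image_mset (lift_v j) (Va1+Vb1)) (Bag (add_mset a_r B_r))"
    using A B b_r by (simp add: lsub_t_Bag_add_msetI)
  moreover have "lsub_b W i (Va2+Vb2) (Wa_r + Wb_r)" using A B h1 lsub_b_plus_iff by blast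
  moreover have "lsub_t (Bag (add_mset a_r B_r)) j (Wa_r + Wb_r) r'"
    using A B b_r h2 by (simp add: lsub_t_Bag_add_msetI)
  ultimately show ?case by blast
next
  case (Var y)
  then show ?case by (rule lsub_lsub_commute_inv_Var)
next
  case (Lam t)
  from Lam.prems(1) obtain t' where h1: "u' = Lam t'" "lsub_t t (Suc j) (image_mset (lift_v 0) W) t'"
    by (auto simp: lsub_v_Lam_iff)
  from Lam.prems(2) h1 obtain r0 where h2: "r' = Lam r0" "lsub_t t' (Suc i) (image_mset (lift_v 0) V) r0"
    by (auto simp: lsub_v_Lam_iff)
  obtain V1' V2' t_r W_r' where h3: "image_mset (lift_v 0) V = V1'+V2'"
     "lsub_t t (Suc (Suc i)) (image_mset (lift_v (Suc j)) V1') t_r"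
     "lsub_b (image_mset (lift_v 0) W) (Suc i) V2' W_r'" "lsub_t t_r (Suc j) W_r' r0"
    using Lam.IH[OF h1(2) h2(2)] Lam.prems(3) by auto
  then obtain A1 A2 where a: "V = A1 + A2" "V1' = image_mset (lift_v 0) A1" "V2' = image_mset (lift_v 0) A2"
    by (meson image_mset_eq_plusD)
  obtain W_r where w: "W_r' = image_mset (lift_v 0) W_r" "lsub_b W i A2 W_r"
    using lsub_b_lift_below_inv[of 0 W i A2 W_r'] h3(3) a by auto
  have "lsub_v (Lam t) (Suc i) (image_mset (lift_v j) A1) (Lam t_r)"
    using h3(2) a by (simp add: lsub_v_Lam_iff image_mset_lift_v_commute)
  moreover have "lsub_v (Lam t_r) j W_r r'" using h3(4) w h2 by (simp add: lsub_v_Lam_iff)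
  ultimately show ?case using a w by blast
qed (auto simp: lsub_t_Bag_iff lsub_b_empty_iff lsub_b_result_empty_iff)

lemma finite_subsets_mset: "finite {A. A \<subseteq># (V::'a multiset)}"
proof -
  have "{A. A \<subseteq># V} \<subseteq> mset ` {xs. set xs \<subseteq> set_mset V \<and> length xs \<le> size V}"
  proof
    fix A assume "A \<in> {A. A \<subseteq># V}"
    moreover obtain xs where "mset xs = A" using ex_mset by blast
    ultimately show "A \<in> mset ` {xs. set xs \<subseteq> set_mset V \<and> length xs \<le> size V}"
      by (intro image_eqI[of _ _ xs]) (auto dest: mset_subset_eqD size_mset_mono)
  qed
  then show ?thesis using finite_lists_length_le[OF finite_set_mset] finite_subset by blast
qed

lemma finite_mset_splits: "finite {(V1, V2). V1 + V2 = (V::'a multiset)}"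
proof (rule finite_subset)
  show "{(V1, V2). V1 + V2 = V} \<subseteq> {A. A \<subseteq># V} \<times> {A. A \<subseteq># V}" by auto
qed (simp add: finite_subsets_mset)

lemma finite_lsub:
  "\<And>x V. finite {r. lsub_t t x V r}"
  "\<And>x V. finite {w. lsub_v v x V w}"
proof (induction t and v rule: rterm_rval_induct)
  case (App s t)
  have "{r. lsub_t (App s t) x V r} \<subseteq> (\<Union>(V1, V2)\<in>{(V1, V2). V1 + V2 = V}.
      (\<lambda>(a, b). App a b) ` ({a. lsub_t s x V1 a} \<times> {b. lsub_t t x V2 b}))"
    by (force simp: lsub_t_App_iff)
  moreover have "finite \<dots>" by (intro finite_UN_I) (use App finite_mset_splits in auto)
  ultimately show ?case by (rule finite_subset)
next
  case (Bag M)
  have "finite {B'. lsub_b C x V B'}" if "set_mset C \<subseteq> set_mset M" for C V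
    using that
  proof (induction C arbitrary: V)
    case (add u C)
    have "{B'. lsub_b (add_mset u C) x V B'} \<subseteq> (\<Union>(V1, V2)\<in>{(V1, V2). V1 + V2 = V}.
        (\<lambda>(a, B). add_mset a B) ` ({a. lsub_v u x V1 a} \<times> {B. lsub_b C x V2 B}))"
      by (force simp: lsub_b_add_iff)
    moreover have "finite \<dots>" by (intro finite_UN_I) (use add Bag.IH finite_mset_splits in auto)
    ultimately show ?case by (rule finite_subset)
  qed (auto simp: lsub_b_empty_iff intro: finite_subset[of _ "{{#}}"])
  moreover have "{r. lsub_t (Bag M) x V r} = Bag ` {B'. lsub_b M x V B'}" by (auto simp: lsub_t_Bag_iff)
  ultimately show ?case by simp
next
  case (Var y)
  have "{w. lsub_v (Var y) x V w} \<subseteq> set_mset V \<union> {Var y, Var (y - 1)}" by (auto simp: lsub_v_Var_iff)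
  then show ?case using finite_subset by blast
next
  case (Lam t)
  have "{w. lsub_v (Lam t) x V w} = Lam ` {r. lsub_t t (Suc x) (image_mset (lift_v 0) V) r}"
    by (auto simp: lsub_v_Lam_iff)
  then show ?case using Lam by simp
qed

lemma finite_linsubst: "finite (linsubst t V)"
  unfolding linsubst_def by (rule finite_lsub)

lemma finite_red: "red_t e E \<Longrightarrow> finite E" "red_v v W \<Longrightarrow> finite W"
  by (induction rule: red_t_red_v.inducts) (auto simp: finite_linsubst)

lemma red_measure_decrease:
  "red_t e E \<Longrightarrow> x \<in> E \<Longrightarrow> tsize x < tsize e \<or> (tsize x = tsize e \<and> tapps x = tapps e \<and> tdepth e < tdepth x)"
  "red_v v W \<Longrightarrow> w \<in> W \<Longrightarrow> vsize w < vsize v \<or> (vsize w = vsize v \<and> vapps w = vapps v \<and> vdepth v < vdepth w)"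
proof (induction arbitrary: x and w rule: red_t_red_v.inducts)
  case (r_beta t V)
  then show ?case using lsub_size(1)[of t 0 V x] by (simp add: linsubst_def)
qed (fastforce simp: lift_measures)+

text \<open>As \<open>tdepth t \<le> tsize t\<^sup>2\<close>, the second component decreases when the depth grows.\<close>

definition red_less :: "(rterm \<times> rterm) set" where
  "red_less = inv_image (less_than <*lex*> less_than) (\<lambda>x. (tsize x, tsize x * tsize x - tdepth x))"

lemma wf_red_less: "wf red_less" unfolding red_less_def by auto

lemma trans_red_less: "trans red_less" unfolding red_less_def
  by (intro trans_inv_image trans_lex_prod) auto

lemma red_less_red: "red_t e E \<Longrightarrow> x \<in> E \<Longrightarrow> (x, e) \<in> red_less"
proof -
  assume a: "red_t e E" "x \<in> E"
  have "tdepth x \<le> tsize x * tsize x" "tdepth e \<le> tsize e * tsize e" by (rule depth_le_size_sq)+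
  then show ?thesis using red_measure_decrease(1)[OF a] unfolding red_less_def by auto
qed

lemma red_less_App: "(s, App s t) \<in> red_less" "(t, App s t) \<in> red_less" unfolding red_less_def by auto

section \<open>Reduction commutes with linear substitution\<close>

lemma linsubst_lift: "linsubst (lift_t (Suc k) t) (image_mset (lift_v k) V) = lift_t k ` linsubst t V"
proof
  show "linsubst (lift_t (Suc k) t) (image_mset (lift_v k) V) \<subseteq> lift_t k ` linsubst t V"
    unfolding linsubst_def using lsub_lift_above_inv(1)[of k t 0 V] by auto
  show "lift_t k ` linsubst t V \<subseteq> linsubst (lift_t (Suc k) t) (image_mset (lift_v k) V)"
    unfolding linsubst_def using lsub_lift_above(1)[of t 0 V _ k] by auto
qed

lemma red_lift: "red_t t T \<Longrightarrow> red_t (lift_t k t) (lift_t k ` T)"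
  "red_v v W \<Longrightarrow> red_v (lift_v k v) (lift_v k ` W)"
proof (induction arbitrary: k and k rule: red_t_red_v.inducts)
  case (r_beta t V)
  show ?case using red_t_red_v.r_beta[of "lift_t (Suc k) t" "image_mset (lift_v k) V"] by (simp add: linsubst_lift)
next
  case (r_zero B t)
  then show ?case by (auto intro: red_t_red_v.r_zero)
next
  case (r_sigma1 t s1 s2)
  show ?case using red_t_red_v.r_sigma1[of "lift_t (Suc k) t" "lift_t k s1" "lift_t k s2"]
    by (simp add: lift_lift(1)[of 0 k, simplified])
next
  case (r_sigma3 v t s)
  show ?case using red_t_red_v.r_sigma3[of "lift_v k v" "lift_t (Suc k) t" "lift_t k s"]
    by (simp add: lift_lift(2)[of 0 k, simplified])
next
  case (r_appL s S t)
  show ?case using red_t_red_v.r_appL[OF r_appL.IH[of k], of "lift_t k t"] by (simp add: image_image)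
next
  case (r_appR t T s)
  show ?case using red_t_red_v.r_appR[OF r_appR.IH[of k], of "lift_t k s"] by (simp add: image_image)
next
  case (r_bag v W B)
  show ?case using red_t_red_v.r_bag[OF r_bag.IH[of k], of "image_mset (lift_v k) B"] by (simp add: image_image)
next
  case (r_lam t T)
  show ?case using red_t_red_v.r_lam[OF r_lam.IH[of "Suc k"]] by (simp add: image_image)
qed

lemma lsub_red_beta:
  assumes "lsub_t (App (Bag {#Lam u#}) (Bag W)) x V r"
  shows "\<exists>R. red_t r R \<and> (\<forall>r'\<in>R. \<exists>t'\<in>linsubst u W. lsub_t t' x V r')"
proof -
  from assms obtain V1 V2 u_r W_r where h: "V = V1 + V2" "r = App (Bag {#Lam u_r#}) (Bag W_r)"
    "lsub_t u (Suc x) (image_mset (lift_v 0) V1) u_r" "lsub_b W x V2 W_r"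
    by (auto simp: lsub_t_App_iff lsub_t_Bag_iff lsub_b_single_iff lsub_v_Lam_iff)
  have "\<forall>r'\<in>linsubst u_r W_r. \<exists>t'\<in>linsubst u W. lsub_t t' x V r'"
  proof
    fix r' assume "r' \<in> linsubst u_r W_r"
    then have "lsub_t u_r 0 W_r r'" by (simp add: linsubst_def)
    from lsub_lsub_commute(1)[OF h(3) _ h(4) this] obtain u' where "lsub_t u 0 W u'" "lsub_t u' x (V1+V2) r'" by auto
    then show "\<exists>t'\<in>linsubst u W. lsub_t t' x V r'" using h(1) by (auto simp: linsubst_def)
  qed
  then show ?thesis using h(2) red_t_red_v.r_beta by blast
qed

lemma lsub_red_sigma1:
  assumes "lsub_t (App (App (Bag {#Lam u#}) s1) s2) x V r"
  shows "\<exists>R. red_t r R \<and> (\<forall>r'\<in>R. \<exists>t'\<in>{App (Bag {#Lam (App u (lift_t 0 s2))#}) s1}. lsub_t t' x V r')"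
proof -
  from assms obtain V1 V2 V3 u_r s1_r s2_r where h: "V = (V1 + V2) + V3"
    "r = App (App (Bag {#Lam u_r#}) s1_r) s2_r"
    "lsub_t u (Suc x) (image_mset (lift_v 0) V1) u_r" "lsub_t s1 x V2 s1_r" "lsub_t s2 x V3 s2_r"
    by (auto simp: lsub_t_App_iff lsub_t_Bag_iff lsub_b_single_iff lsub_v_Lam_iff)
  have "lsub_t (lift_t 0 s2) (Suc x) (image_mset (lift_v 0) V3) (lift_t 0 s2_r)"
    using lsub_lift_below(1)[OF h(5)] by simp
  then have "lsub_t (App u (lift_t 0 s2)) (Suc x) (image_mset (lift_v 0) (V1 + V3)) (App u_r (lift_t 0 s2_r))"
    using h(3) by (simp add: lsub_t_lsub_v_lsub_b.ls_app)
  then have "lsub_t (App (Bag {#Lam (App u (lift_t 0 s2))#}) s1) x ((V1+V3)+V2)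
      (App (Bag {#Lam (App u_r (lift_t 0 s2_r))#}) s1_r)"
    using h(4) by (simp add: lsub_t_lsub_v_lsub_b.ls_app lsub_t_Bag_iff lsub_b_single_iff lsub_v_Lam_iff)
  moreover have "(V1+V3)+V2 = V" using h(1) by (simp add: ac_simps)
  ultimately show ?thesis using h(2) red_t_red_v.r_sigma1 by fastforce
qed

lemma lsub_red_sigma3:
  assumes "lsub_t (App (Bag {#v#}) (App (Bag {#Lam u#}) s)) x V r"
  shows "\<exists>R. red_t r R \<and> (\<forall>r'\<in>R. \<exists>t'\<in>{App (Bag {#Lam (App (Bag {#lift_v 0 v#}) u)#}) s}. lsub_t t' x V r')"
proof -
  from assms obtain V1 V2 V3 v_r u_r s_r where h: "V = V1 + (V2 + V3)"
    "r = App (Bag {#v_r#}) (App (Bag {#Lam u_r#}) s_r)"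
    "lsub_v v x V1 v_r" "lsub_t u (Suc x) (image_mset (lift_v 0) V2) u_r" "lsub_t s x V3 s_r"
    by (auto simp: lsub_t_App_iff lsub_t_Bag_iff lsub_b_single_iff lsub_v_Lam_iff)
  have "lsub_v (lift_v 0 v) (Suc x) (image_mset (lift_v 0) V1) (lift_v 0 v_r)"
    using lsub_lift_below(2)[OF h(3)] by simp
  then have "lsub_t (App (Bag {#lift_v 0 v#}) u) (Suc x) (image_mset (lift_v 0) (V1 + V2)) (App (Bag {#lift_v 0 v_r#}) u_r)"
    using h(4) by (simp add: lsub_t_lsub_v_lsub_b.ls_app lsub_t_Bag_iff lsub_b_single_iff)
  then have "lsub_t (App (Bag {#Lam (App (Bag {#lift_v 0 v#}) u)#}) s) x ((V1+V2)+V3)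
      (App (Bag {#Lam (App (Bag {#lift_v 0 v_r#}) u_r)#}) s_r)"
    using h(5) by (simp add: lsub_t_lsub_v_lsub_b.ls_app lsub_t_Bag_iff lsub_b_single_iff lsub_v_Lam_iff)
  moreover have "(V1+V2)+V3 = V" using h(1) by (simp add: ac_simps)
  ultimately show ?thesis using h(2) red_t_red_v.r_sigma3 by fastforce
qed

lemma lsub_red_beta_inv:
  assumes "t' \<in> linsubst u W" "lsub_t t' x V r'"
  shows "\<exists>r R. lsub_t (App (Bag {#Lam u#}) (Bag W)) x V r \<and> red_t r R \<and> r' \<in> R"
proof -
  from assms(1) have a: "lsub_t u 0 W t'" by (simp add: linsubst_def)
  from lsub_lsub_commute_inv(1)[OF a assms(2)] obtain V1 V2 u_r W_r where h: "V = V1+V2"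
    "lsub_t u (Suc x) (image_mset (lift_v 0) V1) u_r" "lsub_b W x V2 W_r" "lsub_t u_r 0 W_r r'" by auto
  have "lsub_t (App (Bag {#Lam u#}) (Bag W)) x V (App (Bag {#Lam u_r#}) (Bag W_r))"
    using h by (auto simp: lsub_t_App_iff lsub_t_Bag_iff lsub_b_single_iff lsub_v_Lam_iff)
  moreover have "r' \<in> linsubst u_r W_r" using h(4) by (simp add: linsubst_def)
  ultimately show ?thesis using red_t_red_v.r_beta by blast
qed

lemma lsub_red_sigma1_inv:
  assumes "t' \<in> {App (Bag {#Lam (App u (lift_t 0 s2))#}) s1}" "lsub_t t' x V r'"
  shows "\<exists>r R. lsub_t (App (App (Bag {#Lam u#}) s1) s2) x V r \<and> red_t r R \<and> r' \<in> R"
proof -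
  have t'eq: "t' = App (Bag {#Lam (App u (lift_t 0 s2))#}) s1" using assms(1) by simp
  from assms(2) t'eq obtain V1' V2 A s1_r where g: "V = V1' + V2" "r' = App A s1_r"
    "lsub_t (Bag {#Lam (App u (lift_t 0 s2))#}) x V1' A" "lsub_t s1 x V2 s1_r" by (auto simp: lsub_t_App_iff)
  from g(3) obtain body where g2: "A = Bag {#Lam body#}" "lsub_t (App u (lift_t 0 s2)) (Suc x) (image_mset (lift_v 0) V1') body"
    by (auto simp: lsub_t_Bag_iff lsub_b_single_iff lsub_v_Lam_iff)
  from g2(2) obtain P Q u_r X where h2: "image_mset (lift_v 0) V1' = P + Q" "body = App u_r X" "lsub_t u (Suc x) P u_r"
    "lsub_t (lift_t 0 s2) (Suc x) Q X" by (auto simp: lsub_t_App_iff)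
  have h: "V = V1' + V2" "r' = App (Bag {#Lam (App u_r X)#}) s1_r" "lsub_t s1 x V2 s1_r"
    using g g2 h2 by auto
  from h2(1) obtain V1 V3 where h3: "V1' = V1 + V3" "P = image_mset (lift_v 0) V1" "Q = image_mset (lift_v 0) V3"
    by (meson image_mset_eq_plusD)
  obtain s2_r where h4: "X = lift_t 0 s2_r" "lsub_t s2 x V3 s2_r"
    using lsub_lift_below_inv(1)[of 0 s2 x V3 X] h2 h3 by auto
  have "lsub_t (App (App (Bag {#Lam u#}) s1) s2) x ((V1 + V2) + V3) (App (App (Bag {#Lam u_r#}) s1_r) s2_r)"
    using h(3) h2 h3 h4 by (simp add: lsub_t_lsub_v_lsub_b.ls_app lsub_t_Bag_iff lsub_b_single_iff lsub_v_Lam_iff)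
  moreover have "(V1 + V2) + V3 = V" using h h3 by (simp add: ac_simps)
  moreover have "red_t (App (App (Bag {#Lam u_r#}) s1_r) s2_r) {r'}"
    using red_t_red_v.r_sigma1[of u_r s1_r s2_r] h h4 by simp
  ultimately show ?thesis by (metis singletonI)
qed

lemma lsub_red_sigma3_inv:
  assumes "t' \<in> {App (Bag {#Lam (App (Bag {#lift_v 0 v#}) u)#}) s}" "lsub_t t' x V r'"
  shows "\<exists>r R. lsub_t (App (Bag {#v#}) (App (Bag {#Lam u#}) s)) x V r \<and> red_t r R \<and> r' \<in> R"
proof -
  have t'eq: "t' = App (Bag {#Lam (App (Bag {#lift_v 0 v#}) u)#}) s" using assms(1) by simp
  from assms(2) t'eq obtain V1' V3 A s_r where g: "V = V1' + V3" "r' = App A s_r"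
    "lsub_t (Bag {#Lam (App (Bag {#lift_v 0 v#}) u)#}) x V1' A" "lsub_t s x V3 s_r" by (auto simp: lsub_t_App_iff)
  from g(3) obtain body where g2: "A = Bag {#Lam body#}" "lsub_t (App (Bag {#lift_v 0 v#}) u) (Suc x) (image_mset (lift_v 0) V1') body"
    by (auto simp: lsub_t_Bag_iff lsub_b_single_iff lsub_v_Lam_iff)
  from g2(2) obtain P Q y u_r where h2: "image_mset (lift_v 0) V1' = P + Q" "body = App (Bag {#y#}) u_r"
    "lsub_v (lift_v 0 v) (Suc x) P y" "lsub_t u (Suc x) Q u_r"
    by (auto simp: lsub_t_App_iff lsub_t_Bag_iff lsub_b_single_iff)
  have h: "V = V1' + V3" "r' = App (Bag {#Lam (App (Bag {#y#}) u_r)#}) s_r" "lsub_t s x V3 s_r"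
    using g g2 h2 by auto
  from h2(1) obtain V1 V2 where h3: "V1' = V1 + V2" "P = image_mset (lift_v 0) V1" "Q = image_mset (lift_v 0) V2"
    by (meson image_mset_eq_plusD)
  obtain v_r where h4: "y = lift_v 0 v_r" "lsub_v v x V1 v_r"
    using lsub_lift_below_inv(2)[of 0 v x V1 y] h2(3) h3 by auto
  have "lsub_t (App (Bag {#v#}) (App (Bag {#Lam u#}) s)) x (V1 + (V2 + V3)) (App (Bag {#v_r#}) (App (Bag {#Lam u_r#}) s_r))"
    using h(3) h2(4) h3 h4 by (simp add: lsub_t_lsub_v_lsub_b.ls_app lsub_t_Bag_iff lsub_b_single_iff lsub_v_Lam_iff)
  moreover have "V1 + (V2 + V3) = V" using h h3 by (simp add: ac_simps)
  moreover have "red_t (App (Bag {#v_r#}) (App (Bag {#Lam u_r#}) s_r)) {r'}"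
    using red_t_red_v.r_sigma3[of v_r u_r s_r] h h4 by simp
  ultimately show ?thesis by (metis singletonI)
qed

lemma lsub_red_body:
  "red_t t T \<Longrightarrow> lsub_t t x V r \<Longrightarrow> \<exists>R. red_t r R \<and> (\<forall>r'\<in>R. \<exists>t'\<in>T. lsub_t t' x V r')"
  "red_v v W \<Longrightarrow> lsub_v v x V w \<Longrightarrow> \<exists>R. red_v w R \<and> (\<forall>w'\<in>R. \<exists>v'\<in>W. lsub_v v' x V w')"
proof (induction arbitrary: x V r and x V w rule: red_t_red_v.inducts)
  case (r_beta u W)
  then show ?case by (rule lsub_red_beta)
next
  case (r_zero B t)
  from r_zero.prems obtain V1 V2 B' t' where "r = App (Bag B') t'" "lsub_b B x V1 B'"
    by (auto simp: lsub_t_App_iff lsub_t_Bag_iff)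
  then have "red_t r {}" using r_zero.hyps lsub_b_size_eq by (auto intro: red_t_red_v.r_zero)
  then show ?case by blast
next
  case (r_sigma1 u s1 s2)
  then show ?case by (rule lsub_red_sigma1)
next
  case (r_sigma3 v u s)
  then show ?case by (rule lsub_red_sigma3)
next
  case (r_appL s S t)
  from r_appL.prems obtain V1 V2 s_r t_r where h: "V = V1+V2" "r = App s_r t_r" "lsub_t s x V1 s_r" "lsub_t t x V2 t_r"
    by (auto simp: lsub_t_App_iff)
  from r_appL.IH[OF h(3)] obtain R where "red_t s_r R" "\<forall>r'\<in>R. \<exists>t'\<in>S. lsub_t t' x V1 r'" by blast
  then show ?case using h
    by (intro exI[of _ "(\<lambda>a. App a t_r) ` R"]) (auto intro: red_t_red_v.r_appL lsub_t_lsub_v_lsub_b.ls_app)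
next
  case (r_appR t T s)
  from r_appR.prems obtain V1 V2 s_r t_r where h: "V = V1+V2" "r = App s_r t_r" "lsub_t s x V1 s_r" "lsub_t t x V2 t_r"
    by (auto simp: lsub_t_App_iff)
  from r_appR.IH[OF h(4)] obtain R where "red_t t_r R" "\<forall>r'\<in>R. \<exists>t'\<in>T. lsub_t t' x V2 r'" by blast
  then show ?case using h
    by (intro exI[of _ "App s_r ` R"]) (auto intro: red_t_red_v.r_appR lsub_t_lsub_v_lsub_b.ls_app)
next
  case (r_bag v W B)
  from r_bag.prems obtain V1 V2 v_r B_r where h: "V = V1+V2" "r = Bag (add_mset v_r B_r)" "lsub_v v x V1 v_r" "lsub_b B x V2 B_r"
    by (auto simp: lsub_t_Bag_iff lsub_b_add_iff)
  from r_bag.IH[OF h(3)] obtain R where "red_v v_r R" "\<forall>r'\<in>R. \<exists>t'\<in>W. lsub_v t' x V1 r'" by blast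
  then show ?case using h
    by (intro exI[of _ "(\<lambda>w. Bag (add_mset w B_r)) ` R"])
       (fastforce intro: red_t_red_v.r_bag simp: lsub_t_Bag_iff lsub_b_add_iff)
next
  case (r_lam t T)
  from r_lam.prems obtain t_r where h: "w = Lam t_r" "lsub_t t (Suc x) (image_mset (lift_v 0) V) t_r"
    by (auto simp: lsub_v_Lam_iff)
  from r_lam.IH[OF h(2)] obtain R where "red_t t_r R" "\<forall>r'\<in>R. \<exists>t'\<in>T. lsub_t t' (Suc x) (image_mset (lift_v 0) V) r'" by blast
  then show ?case using h
    by (intro exI[of _ "Lam ` R"]) (auto intro: red_t_red_v.r_lam simp: lsub_v_Lam_iff)
qed

lemma lsub_red_body_inv:
  "red_t t T \<Longrightarrow> t' \<in> T \<Longrightarrow> lsub_t t' x V r' \<Longrightarrow> \<exists>r R. lsub_t t x V r \<and> red_t r R \<and> r' \<in> R"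
  "red_v v W \<Longrightarrow> v' \<in> W \<Longrightarrow> lsub_v v' x V w' \<Longrightarrow> \<exists>w R. lsub_v v x V w \<and> red_v w R \<and> w' \<in> R"
proof (induction arbitrary: t' x V r' and v' x V w' rule: red_t_red_v.inducts)
  case (r_beta u W)
  then show ?case by (rule lsub_red_beta_inv)
next
  case (r_zero B t)
  then show ?case by simp
next
  case (r_sigma1 u s1 s2)
  then show ?case by (rule lsub_red_sigma1_inv)
next
  case (r_sigma3 v u s)
  then show ?case by (rule lsub_red_sigma3_inv)
next
  case (r_appL s S t)
  from r_appL.prems obtain s' where s': "s' \<in> S" "t' = App s' t" by auto
  with r_appL.prems obtain V1 V2 a b where h: "V = V1+V2" "r' = App a b" "lsub_t s' x V1 a" "lsub_t t x V2 b"
    by (auto simp: lsub_t_App_iff)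
  from r_appL.IH[OF s'(1) h(3)] obtain r R where "lsub_t s x V1 r" "red_t r R" "a \<in> R" by blast
  then show ?case using h
    by (intro exI[of _ "App r b"] exI[of _ "(\<lambda>a. App a b) ` R"]) (auto intro: red_t_red_v.r_appL lsub_t_lsub_v_lsub_b.ls_app)
next
  case (r_appR t T s)
  from r_appR.prems obtain t'' where s': "t'' \<in> T" "t' = App s t''" by auto
  with r_appR.prems obtain V1 V2 a b where h: "V = V1+V2" "r' = App a b" "lsub_t s x V1 a" "lsub_t t'' x V2 b"
    by (auto simp: lsub_t_App_iff)
  from r_appR.IH[OF s'(1) h(4)] obtain r R where "lsub_t t x V2 r" "red_t r R" "b \<in> R" by blast
  then show ?case using h
    by (intro exI[of _ "App a r"] exI[of _ "App a ` R"]) (auto intro: red_t_red_v.r_appR lsub_t_lsub_v_lsub_b.ls_app)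
next
  case (r_bag v W B)
  from r_bag.prems obtain w where s': "w \<in> W" "t' = Bag (add_mset w B)" by auto
  with r_bag.prems obtain V1 V2 a B_r where h: "V = V1+V2" "r' = Bag (add_mset a B_r)" "lsub_v w x V1 a" "lsub_b B x V2 B_r"
    by (auto simp: lsub_t_Bag_iff lsub_b_add_iff)
  from r_bag.IH[OF s'(1) h(3)] obtain r R where "lsub_v v x V1 r" "red_v r R" "a \<in> R" by blast
  then show ?case using h
    by (intro exI[of _ "Bag (add_mset r B_r)"] exI[of _ "(\<lambda>w. Bag (add_mset w B_r)) ` R"])
       (fastforce intro: red_t_red_v.r_bag simp: lsub_t_Bag_iff lsub_b_add_iff)
next
  case (r_lam t T)
  from r_lam.prems obtain t'' where s': "t'' \<in> T" "v' = Lam t''" by auto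
  with r_lam.prems obtain a where h: "w' = Lam a" "lsub_t t'' (Suc x) (image_mset (lift_v 0) V) a"
    by (auto simp: lsub_v_Lam_iff)
  from r_lam.IH[OF s'(1) h(2)] obtain r R where "lsub_t t (Suc x) (image_mset (lift_v 0) V) r" "red_t r R" "a \<in> R" by blast
  then show ?case using h
    by (intro exI[of _ "Lam r"] exI[of _ "Lam ` R"]) (auto intro: red_t_red_v.r_lam simp: lsub_v_Lam_iff)
qed

text \<open>In the bag clauses a single element of the result bag is reduced, as in rule \<open>r_bag\<close>.\<close>

lemma lsub_red_arg:
  "lsub_t t x V r \<Longrightarrow> \<forall>v W. v \<in># V \<longrightarrow> red_v v W \<longrightarrow>
     (\<exists>R. red_t r R \<and> (\<forall>r'\<in>R. \<exists>w\<in>W. lsub_t t x (add_mset w (V - {#v#})) r'))"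
  "lsub_v u x V u' \<Longrightarrow> \<forall>v W. v \<in># V \<longrightarrow> red_v v W \<longrightarrow>
     (\<exists>R. red_v u' R \<and> (\<forall>w'\<in>R. \<exists>w\<in>W. lsub_v u x (add_mset w (V - {#v#})) w'))"
  "lsub_b B x V B' \<Longrightarrow> \<forall>v W. v \<in># V \<longrightarrow> red_v v W \<longrightarrow>
     (\<exists>v0 C W0. B' = add_mset v0 C \<and> red_v v0 W0 \<and>
        (\<forall>w0\<in>W0. \<exists>w\<in>W. lsub_b B x (add_mset w (V - {#v#})) (add_mset w0 C)))"
proof (induction rule: ls_induct)
  case (ls_app s x V1 s' t V2 t')
  show ?case
  proof (intro allI impI)
    fix v W assume v: "v \<in># V1 + V2" and r: "red_v v W"
    show "\<exists>R. red_t (App s' t') R \<and> (\<forall>r'\<in>R. \<exists>w\<in>W. lsub_t (App s t) x (add_mset w (V1 + V2 - {#v#})) r')"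
    proof (cases "v \<in># V1")
      case True
      then obtain R where R: "red_t s' R" "\<forall>r'\<in>R. \<exists>w\<in>W. lsub_t s x (add_mset w (V1 - {#v#})) r'"
        using ls_app.IH(1) r by blast
      show ?thesis
      proof (intro exI[of _ "(\<lambda>a. App a t') ` R"] conjI ballI)
        show "red_t (App s' t') ((\<lambda>a. App a t') ` R)" using R(1) by (rule red_t_red_v.r_appL)
        fix r' assume "r' \<in> (\<lambda>a. App a t') ` R"
        then obtain a where a: "a \<in> R" "r' = App a t'" by blast
        then obtain w where w: "w \<in> W" "lsub_t s x (add_mset w (V1 - {#v#})) a" using R(2) by blast
        have "lsub_t (App s t) x (add_mset w (V1 - {#v#}) + V2) (App a t')"
          using w(2) ls_app.hyps(2) by (rule lsub_t_lsub_v_lsub_b.ls_app)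
        moreover have "add_mset w (V1 + V2 - {#v#}) = add_mset w (V1 - {#v#}) + V2"
          using True by (auto simp: multiset_eq_iff)
        ultimately show "\<exists>w\<in>W. lsub_t (App s t) x (add_mset w (V1 + V2 - {#v#})) r'"
          using w(1) a(2) by metis
      qed
    next
      case False
      then have v2: "v \<in># V2" using v by auto
      then obtain R where R: "red_t t' R" "\<forall>r'\<in>R. \<exists>w\<in>W. lsub_t t x (add_mset w (V2 - {#v#})) r'"
        using ls_app.IH(2) r by blast
      show ?thesis
      proof (intro exI[of _ "App s' ` R"] conjI ballI)
        show "red_t (App s' t') (App s' ` R)" using R(1) by (rule red_t_red_v.r_appR)
        fix r' assume "r' \<in> App s' ` R"
        then obtain a where a: "a \<in> R" "r' = App s' a" by blast
        then obtain w where w: "w \<in> W" "lsub_t t x (add_mset w (V2 - {#v#})) a" using R(2) by blast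
        have "lsub_t (App s t) x (V1 + add_mset w (V2 - {#v#})) (App s' a)"
          using ls_app.hyps(1) w(2) by (rule lsub_t_lsub_v_lsub_b.ls_app)
        moreover have "add_mset w (V1 + V2 - {#v#}) = V1 + add_mset w (V2 - {#v#})"
          using v2 by (auto simp: multiset_eq_iff)
        ultimately show "\<exists>w\<in>W. lsub_t (App s t) x (add_mset w (V1 + V2 - {#v#})) r'"
          using w(1) a(2) by metis
      qed
    qed
  qed
next
  case (ls_bag B x V B')
  show ?case
  proof (intro allI impI)
    fix v W assume v: "v \<in># V" and r: "red_v v W"
    then obtain v0 C W0 where h: "B' = add_mset v0 C" "red_v v0 W0"
        "\<forall>w0\<in>W0. \<exists>w\<in>W. lsub_b B x (add_mset w (V - {#v#})) (add_mset w0 C)"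
      using ls_bag.IH by blast
    show "\<exists>R. red_t (Bag B') R \<and> (\<forall>r'\<in>R. \<exists>w\<in>W. lsub_t (Bag B) x (add_mset w (V - {#v#})) r')"
    proof (intro exI[of _ "(\<lambda>w. Bag (add_mset w C)) ` W0"] conjI ballI)
      show "red_t (Bag B') ((\<lambda>w. Bag (add_mset w C)) ` W0)" using h(1) red_t_red_v.r_bag[OF h(2)] by simp
      fix r' assume "r' \<in> (\<lambda>w. Bag (add_mset w C)) ` W0"
      then obtain w0 where a: "w0 \<in> W0" "r' = Bag (add_mset w0 C)" by blast
      then show "\<exists>w\<in>W. lsub_t (Bag B) x (add_mset w (V - {#v#})) r'"
        using h(3) by (auto simp: lsub_t_Bag_iff)
    qed
  qed
next
  case (ls_var_eq x v)
  show ?case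
  proof (intro allI impI)
    fix v' W assume "v' \<in># {#v#}" "red_v v' W"
    then show "\<exists>R. red_v v R \<and> (\<forall>w'\<in>R. \<exists>w\<in>W. lsub_v (Var x) x (add_mset w ({#v#} - {#v'#})) w')"
      by (intro exI[of _ W]) (auto intro: lsub_t_lsub_v_lsub_b.ls_var_eq)
  qed
next
  case (ls_lam t x V t')
  show ?case
  proof (intro allI impI)
    fix v W assume v: "v \<in># V" and r: "red_v v W"
    have "lift_v 0 v \<in># image_mset (lift_v 0) V" using v by simp
    moreover have "red_v (lift_v 0 v) (lift_v 0 ` W)" using red_lift(2)[OF r] .
    ultimately obtain R where h: "red_t t' R"
      "\<forall>r'\<in>R. \<exists>w\<in>lift_v 0 ` W. lsub_t t (Suc x) (add_mset w (image_mset (lift_v 0) V - {#lift_v 0 v#})) r'"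
      using ls_lam.IH by blast
    have e: "add_mset (lift_v 0 w) (image_mset (lift_v 0) V - {#lift_v 0 v#}) =
        image_mset (lift_v 0) (add_mset w (V - {#v#}))" for w
      using v by (simp add: image_mset_Diff)
    show "\<exists>R. red_v (Lam t') R \<and> (\<forall>w'\<in>R. \<exists>w\<in>W. lsub_v (Lam t) x (add_mset w (V - {#v#})) w')"
    proof (intro exI[of _ "Lam ` R"] conjI ballI)
      show "red_v (Lam t') (Lam ` R)" using h(1) by (rule red_t_red_v.r_lam)
      fix w' assume "w' \<in> Lam ` R"
      then obtain a where a: "a \<in> R" "w' = Lam a" by blast
      then obtain w where w: "w \<in> W" "lsub_t t (Suc x) (add_mset (lift_v 0 w) (image_mset (lift_v 0) V - {#lift_v 0 v#})) a"
        using h(2) by blast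
      then show "\<exists>w\<in>W. lsub_v (Lam t) x (add_mset w (V - {#v#})) w'"
        using a(2) e by (auto simp: lsub_v_Lam_iff)
    qed
  qed
next
  case (ls_add u x V1 u' B V2 B')
  show ?case
  proof (intro allI impI)
    fix v W assume v: "v \<in># V1 + V2" and r: "red_v v W"
    show "\<exists>v0 C W0. add_mset u' B' = add_mset v0 C \<and> red_v v0 W0 \<and>
        (\<forall>w0\<in>W0. \<exists>w\<in>W. lsub_b (add_mset u B) x (add_mset w (V1 + V2 - {#v#})) (add_mset w0 C))"
    proof (cases "v \<in># V1")
      case True
      then obtain R where R: "red_v u' R" "\<forall>r'\<in>R. \<exists>w\<in>W. lsub_v u x (add_mset w (V1 - {#v#})) r'"
        using ls_add.IH(1) r by blast
      show ?thesis
      proof (intro exI[of _ u'] exI[of _ B'] exI[of _ R] conjI ballI refl R(1))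
        fix w0 assume "w0 \<in> R"
        then obtain w where w: "w \<in> W" "lsub_v u x (add_mset w (V1 - {#v#})) w0" using R(2) by blast
        have "lsub_b (add_mset u B) x (add_mset w (V1 - {#v#}) + V2) (add_mset w0 B')"
          using w(2) ls_add.hyps(2) by (rule lsub_t_lsub_v_lsub_b.ls_add)
        moreover have "add_mset w (V1 + V2 - {#v#}) = add_mset w (V1 - {#v#}) + V2"
          using True by (auto simp: multiset_eq_iff)
        ultimately show "\<exists>w\<in>W. lsub_b (add_mset u B) x (add_mset w (V1 + V2 - {#v#})) (add_mset w0 B')"
          using w(1) by metis
      qed
    next
      case False
      then have v2: "v \<in># V2" using v by auto
      then obtain v0 C W0 where h: "B' = add_mset v0 C" "red_v v0 W0"
        "\<forall>w0\<in>W0. \<exists>w\<in>W. lsub_b B x (add_mset w (V2 - {#v#})) (add_mset w0 C)"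
        using ls_add.IH(2) r by blast
      show ?thesis
      proof (intro exI[of _ v0] exI[of _ "add_mset u' C"] exI[of _ W0] conjI ballI h(2))
        show "add_mset u' B' = add_mset v0 (add_mset u' C)" using h(1) by simp
        fix w0 assume "w0 \<in> W0"
        then obtain w where w: "w \<in> W" "lsub_b B x (add_mset w (V2 - {#v#})) (add_mset w0 C)" using h(3) by blast
        have "lsub_b (add_mset u B) x (V1 + add_mset w (V2 - {#v#})) (add_mset u' (add_mset w0 C))"
          using ls_add.hyps(1) w(2) by (rule lsub_t_lsub_v_lsub_b.ls_add)
        moreover have "add_mset w (V1 + V2 - {#v#}) = V1 + add_mset w (V2 - {#v#})"
          using v2 by (auto simp: multiset_eq_iff)
        moreover have "add_mset u' (add_mset w0 C) = add_mset w0 (add_mset u' C)" by (rule add_mset_commute)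
        ultimately show "\<exists>w\<in>W. lsub_b (add_mset u B) x (add_mset w (V1 + V2 - {#v#})) (add_mset w0 (add_mset u' C))"
          using w(1) by metis
      qed
    qed
  qed
qed auto

lemma lsub_red_arg_inv:
  "lsub_t t x V r' \<Longrightarrow> \<forall>w W v. w \<in># V \<longrightarrow> w \<in> W \<longrightarrow> red_v v W \<longrightarrow>
     (\<exists>r R. lsub_t t x (add_mset v (V - {#w#})) r \<and> red_t r R \<and> r' \<in> R)"
  "lsub_v u x V u' \<Longrightarrow> \<forall>w W v. w \<in># V \<longrightarrow> w \<in> W \<longrightarrow> red_v v W \<longrightarrow>
     (\<exists>r R. lsub_v u x (add_mset v (V - {#w#})) r \<and> red_v r R \<and> u' \<in> R)"
  "lsub_b B x V B' \<Longrightarrow> \<forall>w W v. w \<in># V \<longrightarrow> w \<in> W \<longrightarrow> red_v v W \<longrightarrow>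
     (\<exists>v0 C W0 w0. lsub_b B x (add_mset v (V - {#w#})) (add_mset v0 C) \<and> red_v v0 W0 \<and> w0 \<in> W0 \<and>
        B' = add_mset w0 C)"
proof (induction rule: ls_induct)
  case (ls_app s x V1 s' t V2 t')
  show ?case
  proof (intro allI impI)
    fix w W v assume w: "w \<in># V1 + V2" and wW: "w \<in> W" and r: "red_v v W"
    show "\<exists>r R. lsub_t (App s t) x (add_mset v (V1 + V2 - {#w#})) r \<and> red_t r R \<and> App s' t' \<in> R"
    proof (cases "w \<in># V1")
      case True
      then obtain a R where R: "lsub_t s x (add_mset v (V1 - {#w#})) a" "red_t a R" "s' \<in> R"
        using ls_app.IH(1) r wW by blast
      have "lsub_t (App s t) x (add_mset v (V1 - {#w#}) + V2) (App a t')"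
        using R(1) ls_app.hyps(2) by (rule lsub_t_lsub_v_lsub_b.ls_app)
      moreover have "add_mset v (V1 + V2 - {#w#}) = add_mset v (V1 - {#w#}) + V2"
        using True by (auto simp: multiset_eq_iff)
      moreover have "red_t (App a t') ((\<lambda>a. App a t') ` R)" using R(2) by (rule red_t_red_v.r_appL)
      ultimately show ?thesis using R(3) by (metis image_eqI)
    next
      case False
      then have w2: "w \<in># V2" using w by auto
      then obtain a R where R: "lsub_t t x (add_mset v (V2 - {#w#})) a" "red_t a R" "t' \<in> R"
        using ls_app.IH(2) r wW by blast
      have "lsub_t (App s t) x (V1 + add_mset v (V2 - {#w#})) (App s' a)"
        using ls_app.hyps(1) R(1) by (rule lsub_t_lsub_v_lsub_b.ls_app)
      moreover have "add_mset v (V1 + V2 - {#w#}) = V1 + add_mset v (V2 - {#w#})"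
        using w2 by (auto simp: multiset_eq_iff)
      moreover have "red_t (App s' a) (App s' ` R)" using R(2) by (rule red_t_red_v.r_appR)
      ultimately show ?thesis using R(3) by (metis image_eqI)
    qed
  qed
next
  case (ls_bag B x V B')
  show ?case
  proof (intro allI impI)
    fix w W v assume w: "w \<in># V" and wW: "w \<in> W" and r: "red_v v W"
    then obtain v0 C W0 w0 where h: "lsub_b B x (add_mset v (V - {#w#})) (add_mset v0 C)" "red_v v0 W0" "w0 \<in> W0"
        "B' = add_mset w0 C" using ls_bag.IH by blast
    have "lsub_t (Bag B) x (add_mset v (V - {#w#})) (Bag (add_mset v0 C))" using h(1) by (simp add: lsub_t_Bag_iff)
    moreover have "red_t (Bag (add_mset v0 C)) ((\<lambda>w. Bag (add_mset w C)) ` W0)" using h(2) by (rule red_t_red_v.r_bag)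
    ultimately show "\<exists>r R. lsub_t (Bag B) x (add_mset v (V - {#w#})) r \<and> red_t r R \<and> Bag B' \<in> R"
      using h(3,4) by blast
  qed
next
  case (ls_var_eq x v0)
  show ?case
  proof (intro allI impI)
    fix w W v assume "w \<in># {#v0#}" "w \<in> W" "red_v v W"
    then show "\<exists>r R. lsub_v (Var x) x (add_mset v ({#v0#} - {#w#})) r \<and> red_v r R \<and> v0 \<in> R"
      by (intro exI[of _ v] exI[of _ W]) (auto intro: lsub_t_lsub_v_lsub_b.ls_var_eq)
  qed
next
  case (ls_lam t x V t')
  show ?case
  proof (intro allI impI)
    fix w W v assume w: "w \<in># V" and wW: "w \<in> W" and r: "red_v v W"
    have "lift_v 0 w \<in># image_mset (lift_v 0) V" "lift_v 0 w \<in> lift_v 0 ` W" using w wW by auto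
    moreover have "red_v (lift_v 0 v) (lift_v 0 ` W)" using red_lift(2)[OF r] .
    ultimately obtain a R where h: "lsub_t t (Suc x) (add_mset (lift_v 0 v) (image_mset (lift_v 0) V - {#lift_v 0 w#})) a"
      "red_t a R" "t' \<in> R"
      using ls_lam.IH by blast
    have e: "add_mset (lift_v 0 v) (image_mset (lift_v 0) V - {#lift_v 0 w#}) =
        image_mset (lift_v 0) (add_mset v (V - {#w#}))"
      using w by (simp add: image_mset_Diff)
    have "lsub_v (Lam t) x (add_mset v (V - {#w#})) (Lam a)" using h(1) e by (simp add: lsub_v_Lam_iff)
    moreover have "red_v (Lam a) (Lam ` R)" using h(2) by (rule red_t_red_v.r_lam)
    ultimately show "\<exists>r R. lsub_v (Lam t) x (add_mset v (V - {#w#})) r \<and> red_v r R \<and> Lam t' \<in> R"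
      using h(3) by blast
  qed
next
  case (ls_add u x V1 u' B V2 B')
  show ?case
  proof (intro allI impI)
    fix w W v assume w: "w \<in># V1 + V2" and wW: "w \<in> W" and r: "red_v v W"
    show "\<exists>v0 C W0 w0. lsub_b (add_mset u B) x (add_mset v (V1 + V2 - {#w#})) (add_mset v0 C) \<and>
        red_v v0 W0 \<and> w0 \<in> W0 \<and> add_mset u' B' = add_mset w0 C"
    proof (cases "w \<in># V1")
      case True
      then obtain a R where R: "lsub_v u x (add_mset v (V1 - {#w#})) a" "red_v a R" "u' \<in> R"
        using ls_add.IH(1) r wW by blast
      have "lsub_b (add_mset u B) x (add_mset v (V1 - {#w#}) + V2) (add_mset a B')"
        using R(1) ls_add.hyps(2) by (rule lsub_t_lsub_v_lsub_b.ls_add)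
      moreover have "add_mset v (V1 + V2 - {#w#}) = add_mset v (V1 - {#w#}) + V2"
        using True by (auto simp: multiset_eq_iff)
      ultimately show ?thesis using R(2,3) by metis
    next
      case False
      then have w2: "w \<in># V2" using w by auto
      then obtain v0 C W0 w0 where h: "lsub_b B x (add_mset v (V2 - {#w#})) (add_mset v0 C)" "red_v v0 W0" "w0 \<in> W0"
        "B' = add_mset w0 C" using ls_add.IH(2) r wW by blast
      have "lsub_b (add_mset u B) x (V1 + add_mset v (V2 - {#w#})) (add_mset u' (add_mset v0 C))"
        using ls_add.hyps(1) h(1) by (rule lsub_t_lsub_v_lsub_b.ls_add)
      moreover have "add_mset v (V1 + V2 - {#w#}) = V1 + add_mset v (V2 - {#w#})"
        using w2 by (auto simp: multiset_eq_iff)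
      moreover have "add_mset u' (add_mset v0 C) = add_mset v0 (add_mset u' C)" by (rule add_mset_commute)
      moreover have "add_mset u' B' = add_mset w0 (add_mset u' C)" using h(4) by (simp add: add_mset_commute)
      ultimately show ?thesis using h(2,3) by metis
    qed
  qed
qed auto

section \<open>Normal forms by well-founded induction\<close>

lemma NF_simps[simp]: "NF {} = {}" "NF (insert x A) = nf x \<union> NF A" "NF (A \<union> B) = NF A \<union> NF B"
  "NF (f ` S) = (\<Union>s\<in>S. nf (f s))"
  by (auto simp: NF_def)

lemma NF_UN: "NF (\<Union>x\<in>A. F x) = (\<Union>x\<in>A. NF (F x))" by (auto simp: NF_def)

definition irreducible :: "rterm \<Rightarrow> bool" where "irreducible y \<longleftrightarrow> (\<nexists>X. red_t y X)"

lemma red_set_single: "red_set {y} G \<longleftrightarrow> red_t y G"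
proof
  assume "red_set {y} G"
  then obtain e E1 E2 where h: "red_t e E1" "e \<notin> E2" "{y} = insert e E2" "G = E1 \<union> E2"
    unfolding red_set_def by blast
  then have "e = y" "E2 = {}" by auto
  then show "red_t y G" using h by simp
next
  assume "red_t y G"
  then show "red_set {y} G" unfolding red_set_def
    by (intro exI[of _ y] exI[of _ G] exI[of _ "{}"]) auto
qed

lemma nf_irreducible: assumes "irreducible y" shows "nf y = {y}"
proof -
  have n: "normal_set {y}" using assms unfolding normal_set_def irreducible_def red_set_single by blast
  have u: "F = {y}" if "red_set\<^sup>*\<^sup>* {y} F" for F
    using that
  proof (cases rule: converse_rtranclpE)
    case (step G)
    then show ?thesis using assms unfolding irreducible_def red_set_single by blast
  qed simp
  show ?thesis unfolding nf_def using n u by (intro the_equality) auto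
qed

lemma normal_set_irreducible: "normal_set F \<Longrightarrow> finite F \<Longrightarrow> y \<in> F \<Longrightarrow> irreducible y"
proof -
  assume a: "normal_set F" "finite F" "y \<in> F"
  show "irreducible y"
  proof (rule ccontr)
    assume "\<not> irreducible y"
    then obtain X where "red_t y X" unfolding irreducible_def by blast
    then have "red_set F (X \<union> (F - {y}))" unfolding red_set_def using a by (intro exI[of _ y] exI[of _ X] exI[of _ "F - {y}"]) auto
    then show False using a(1) unfolding normal_set_def by blast
  qed
qed

lemma NF_normal_set: "normal_set F \<Longrightarrow> finite F \<Longrightarrow> NF F = F"
  using normal_set_irreducible nf_irreducible unfolding NF_def by auto

lemma red_set_finite: "red_set A B \<Longrightarrow> finite A \<and> finite B"
  unfolding red_set_def using finite_red(1) by auto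

lemma red_set_red_less: "red_set A B \<Longrightarrow> y \<in> B \<Longrightarrow> y \<in> A \<or> (\<exists>x\<in>A. (y, x) \<in> red_less)"
  unfolding red_set_def using red_less_red by blast

lemma red_set_mult: "red_set A B \<Longrightarrow> (mset_set B, mset_set A) \<in> mult red_less"
proof -
  assume "red_set A B"
  then obtain e E1 E2 where h: "red_t e E1" "e \<notin> E2" "finite E2" "A = insert e E2" "B = E1 \<union> E2"
    unfolding red_set_def by blast
  have f1: "finite E1" using finite_red(1)[OF h(1)] .
  have "mset_set B = mset_set E2 + mset_set (E1 - E2)"
  proof -
    have "B = E2 \<union> (E1 - E2)" using h by auto
    moreover have "mset_set (E2 \<union> (E1 - E2)) = mset_set E2 + mset_set (E1 - E2)"
      by (rule mset_set_Union) (use h f1 in auto)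
    ultimately show ?thesis by simp
  qed
  moreover have "mset_set A = mset_set E2 + {#e#}" using h by simp
  moreover have "(mset_set E2 + mset_set (E1 - E2), mset_set E2 + {#e#}) \<in> mult red_less"
    by (rule one_step_implies_mult) (use h f1 red_less_red in auto)
  ultimately show ?thesis by simp
qed

lemma wf_red_set: "wf {(B, A). red_set A B}"
proof (rule wf_subset)
  show "wf (inv_image (mult red_less) mset_set)" using wf_mult[OF wf_red_less] by simp
  show "{(B, A). red_set A B} \<subseteq> inv_image (mult red_less) mset_set" using red_set_mult by auto
qed

lemma red_set_normalizes: "\<exists>F. red_set\<^sup>*\<^sup>* A F \<and> normal_set F"
proof (induction A rule: wf_induct[OF wf_red_set])
  case (1 A)
  show ?case
  proof (cases "normal_set A")
    case True
    then show ?thesis by blast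
  next
    case False
    then obtain B where "red_set A B" unfolding normal_set_def by blast
    with 1 obtain F where "red_set\<^sup>*\<^sup>* B F" "normal_set F" by blast
    then show ?thesis using \<open>red_set A B\<close> by (meson converse_rtranclp_into_rtranclp)
  qed
qed

text \<open>\<open>nf\<close> is a definite description, so it is unspecified until uniqueness of normal forms is
  known; \<open>nf_correct x\<close> says that \<open>nf x\<close> really is the normal form reached from \<open>x\<close> and that it
  is the union of the normal forms of any one-step reduct of \<open>x\<close>.\<close>

definition nf_expands :: "rterm \<Rightarrow> bool" where "nf_expands x \<longleftrightarrow> (\<forall>X. red_t x X \<longrightarrow> nf x = NF X)"

definition nf_correct :: "rterm \<Rightarrow> bool" where
  "nf_correct x \<longleftrightarrow> nf_expands x \<and> red_set\<^sup>*\<^sup>* {x} (nf x) \<and> normal_set (nf x) \<and> finite (nf x)"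

definition nf_correct_below :: "rterm \<Rightarrow> bool" where
  "nf_correct_below e \<longleftrightarrow> (\<forall>x. (x, e) \<in> red_less \<longrightarrow> nf_correct x)"

lemma red_set_NF: "red_set A B \<Longrightarrow> (\<forall>x\<in>A. nf_expands x) \<Longrightarrow> NF A = NF B"
  unfolding red_set_def nf_expands_def by auto

lemma rtranclp_red_set_below:
  assumes "red_set\<^sup>*\<^sup>* A F" "\<forall>x\<in>A. (x, e) \<in> red_less" "nf_correct_below e" "finite A"
  shows "NF A = NF F \<and> (\<forall>x\<in>F. (x, e) \<in> red_less) \<and> finite F"
  using assms(1)
proof (induction rule: rtranclp_induct)
  case base
  then show ?case using assms by simp
next
  case (step B C)
  have "\<forall>x\<in>B. nf_expands x" using step.IH assms(3) unfolding nf_correct_below_def nf_correct_def by blast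
  then have "NF B = NF C" using red_set_NF step.hyps(2) by blast
  moreover have "\<forall>x\<in>C. (x, e) \<in> red_less" using red_set_red_less[OF step.hyps(2)] step.IH trans_red_less
    by (meson transD)
  moreover have "finite C" using red_set_finite step.hyps(2) by blast
  ultimately show ?case using step.IH by simp
qed

lemma nf_correct_step:
  assumes H: "nf_correct_below e" and lc: "\<And>E1 E2. red_t e E1 \<Longrightarrow> red_t e E2 \<Longrightarrow> NF E1 = NF E2"
  shows "nf_correct e"
proof (cases "irreducible e")
  case True
  then show ?thesis using nf_irreducible[OF True] unfolding nf_correct_def nf_expands_def irreducible_def normal_set_def
    by (auto simp: red_set_single)
next
  case False
  then obtain E0 where E0: "red_t e E0" unfolding irreducible_def by blast
  have uniq: "F = NF E0" if "red_set\<^sup>*\<^sup>* {e} F" "normal_set F" for F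
    using that(1)
  proof (cases rule: converse_rtranclpE)
    case base
    then show ?thesis using that(2) E0 unfolding normal_set_def by (auto simp: red_set_single)
  next
    case (step G)
    then have G: "red_t e G" by (simp add: red_set_single)
    have "NF G = NF F \<and> (\<forall>x\<in>F. (x, e) \<in> red_less) \<and> finite F"
      by (rule rtranclp_red_set_below[OF step(2) _ H]) (use G red_less_red finite_red in auto)
    then have "NF G = F" using NF_normal_set that(2) by auto
    then show ?thesis using lc[OF G E0] by simp
  qed
  obtain F where F: "red_set\<^sup>*\<^sup>* {e} F" "normal_set F" using red_set_normalizes by blast
  have nfe: "nf e = NF E0" unfolding nf_def
    by (rule the_equality) (use F uniq in auto)
  have fin: "finite F"
  proof (cases rule: converse_rtranclpE[OF F(1)])
    case 1 then show ?thesis by (metis finite.emptyI finite_insert)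
  next
    case (2 G)
    have "red_t e G" using 2 by (simp add: red_set_single)
    then show ?thesis using rtranclp_red_set_below[OF 2(2) _ H] red_less_red finite_red by blast
  qed
  show ?thesis unfolding nf_correct_def nf_expands_def
    using nfe uniq[OF F] F fin lc[OF E0] by auto
qed

lemma red_less_induct[case_names less]: "(\<And>x. (\<And>y. (y,x) \<in> red_less \<Longrightarrow> P y) \<Longrightarrow> P x) \<Longrightarrow> P a"
  using wf_induct_rule[OF wf_red_less] by blast

lemma red_less_red_trans: "(x, e) \<in> red_less \<Longrightarrow> red_t x X \<Longrightarrow> y \<in> X \<Longrightarrow> (y, e) \<in> red_less"
  using red_less_red trans_red_less by (meson transD)

lemma red_less_trans: "(x, e) \<in> red_less \<Longrightarrow> (y, x) \<in> red_less \<Longrightarrow> (y, e) \<in> red_less"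
  using trans_red_less by (meson transD)

lemma nf_expands_below: "nf_correct_below e \<Longrightarrow> (x, e) \<in> red_less \<Longrightarrow> red_t x X \<Longrightarrow> nf x = NF X"
  unfolding nf_correct_below_def nf_correct_def nf_expands_def by blast

lemma nf_correct_belowD: "nf_correct_below e \<Longrightarrow> (x, e) \<in> red_less \<Longrightarrow> nf_correct x"
  unfolding nf_correct_below_def by blast

text \<open>Normal forms of \<open>x\<close> are \<open>red_le\<close>-below \<open>x\<close>; unlike \<open>red_less\<close>, this preorder is preserved
  by bag contexts, because it keeps the number of applications fixed at equal size.\<close>

definition red_le :: "rterm \<Rightarrow> rterm \<Rightarrow> bool" where
  "red_le y x \<longleftrightarrow> tsize y < tsize x \<or> (tsize y = tsize x \<and> tapps y = tapps x \<and> tdepth x \<le> tdepth y)"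

lemma red_le_refl: "red_le x x" by (simp add: red_le_def)
lemma red_le_trans: "red_le z y \<Longrightarrow> red_le y x \<Longrightarrow> red_le z x" by (auto simp: red_le_def)
lemma red_le_red: "red_t x X \<Longrightarrow> y \<in> X \<Longrightarrow> red_le y x"
  using red_measure_decrease(1) by (fastforce simp: red_le_def)
lemma red_le_less_trans: "red_le y x \<Longrightarrow> (x, e) \<in> red_less \<Longrightarrow> (y, e) \<in> red_less"
proof -
  assume a: "red_le y x" "(x, e) \<in> red_less"
  have "tdepth y \<le> tsize y * tsize y" "tdepth x \<le> tsize x * tsize x" by (rule depth_le_size_sq)+
  then show ?thesis using a unfolding red_le_def red_less_def by auto
qed
lemma red_le_Bag_Lam: "red_le y x \<Longrightarrow> red_le (Bag (add_mset (Lam y) C)) (Bag (add_mset (Lam x) C))"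
  by (auto simp: red_le_def)

lemma rtranclp_red_set_red_le: "red_set\<^sup>*\<^sup>* A F \<Longrightarrow> \<forall>z\<in>A. red_le z x \<Longrightarrow> \<forall>z\<in>F. red_le z x"
proof (induction rule: rtranclp_induct)
  case (step B C)
  from step.hyps(2) obtain e0 E1 E2 where h: "red_t e0 E1" "B = insert e0 E2" "C = E1 \<union> E2"
    unfolding red_set_def by blast
  show ?case
  proof
    fix z assume "z \<in> C"
    then show "red_le z x"
    proof (cases "z \<in> E2")
      case True then show ?thesis using step.IH[OF step.prems] h by blast
    next
      case False
      then have "z \<in> E1" using \<open>z \<in> C\<close> h by blast
      then have "red_le z e0" using red_le_red[OF h(1)] by blast
      moreover have "red_le e0 x" using step.IH[OF step.prems] h by blast
      ultimately show ?thesis by (rule red_le_trans)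
    qed
  qed
qed simp

lemma red_le_nf: "nf_correct x \<Longrightarrow> y \<in> nf x \<Longrightarrow> red_le y x"
  using rtranclp_red_set_red_le[of "{x}" "nf x" x] red_le_refl unfolding nf_correct_def by auto

lemma red_less_Bag_Lam: "(t, Bag (add_mset (Lam t) C)) \<in> red_less"
  unfolding red_less_def by auto

lemma red_Bag_Lam: "red_t t T \<Longrightarrow> red_t (Bag (add_mset (Lam t) C)) ((\<lambda>t'. Bag (add_mset (Lam t') C)) ` T)"
  using red_t_red_v.r_bag[OF red_t_red_v.r_lam, of t T C] by (simp add: image_image)

lemma red_le_App: "red_le a' a \<Longrightarrow> red_le (App a' b) (App a b)"
  by (auto simp: red_le_def)

lemma nf_context_below:
  assumes H: "nf_correct_below e"
    and red_C: "\<And>x X. red_t x X \<Longrightarrow> red_t (C x) (C ` X)"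
    and less_C: "\<And>x. (x, C x) \<in> red_less"
    and "(C a, e) \<in> red_less"
  shows "nf (C a) = (\<Union>a'\<in>nf a. nf (C a'))"
  using assms(4)
proof (induction a rule: red_less_induct)
  case (less a)
  show ?case
  proof (cases "irreducible a")
    case True
    then show ?thesis by (simp add: nf_irreducible)
  next
    case False
    then obtain A where A: "red_t a A" unfolding irreducible_def by blast
    have r: "red_t (C a) (C ` A)" using red_C[OF A] .
    have "nf (C a) = (\<Union>a1\<in>A. nf (C a1))" using nf_expands_below[OF H less.prems r] by simp
    also have "\<dots> = (\<Union>a1\<in>A. \<Union>a'\<in>nf a1. nf (C a'))"
    proof (rule SUP_cong[OF refl])
      fix a1 assume "a1 \<in> A"
      then show "nf (C a1) = (\<Union>a'\<in>nf a1. nf (C a'))"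
        using less.IH red_less_red[OF A] red_less_red_trans[OF less.prems r] by blast
    qed
    also have "\<dots> = (\<Union>a'\<in>NF A. nf (C a'))" by (auto simp: NF_def)
    also have "NF A = nf a" using nf_expands_below[OF H _ A] red_less_trans[OF less.prems less_C] by simp
    finally show ?thesis .
  qed
qed

definition app_nf :: "rterm \<Rightarrow> rterm \<Rightarrow> rterm set" where
  "app_nf s t = (\<Union>a\<in>nf s. \<Union>b\<in>nf t. nf (App a b))"

lemma nf_App_below:
  assumes H: "nf_correct_below e" and e: "(App a b, e) \<in> red_less"
  shows "nf (App a b) = app_nf a b"
proof -
  have "nf (App a b) = (\<Union>a'\<in>nf a. nf (App a' b))"
    by (rule nf_context_below[where C = "\<lambda>x. App x b", OF H _ _ e])
      (auto intro: red_t_red_v.r_appL red_less_App)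
  also have "\<dots> = app_nf a b"
    unfolding app_nf_def
  proof (rule SUP_cong[OF refl])
    fix a' assume "a' \<in> nf a"
    then have "red_le a' a" using red_le_nf nf_correct_belowD[OF H red_less_trans[OF e red_less_App(1)]] by blast
    then have a'b: "(App a' b, e) \<in> red_less" using red_le_less_trans[OF red_le_App e] by blast
    show "nf (App a' b) = (\<Union>b'\<in>nf b. nf (App a' b'))"
      by (rule nf_context_below[where C = "App a'", OF H _ _ a'b]) (auto intro: red_t_red_v.r_appR red_less_App)
  qed
  finally show ?thesis .
qed

lemma nf_Bag_Lam_below:
  assumes "nf_correct_below e" "(Bag (add_mset (Lam u) C), e) \<in> red_less"
  shows "nf (Bag (add_mset (Lam u) C)) = (\<Union>u'\<in>nf u. nf (Bag (add_mset (Lam u') C)))"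
  by (rule nf_context_below[where C = "\<lambda>x. Bag (add_mset (Lam x) C)", OF assms(1) _ _ assms(2)])
    (auto intro: red_Bag_Lam red_less_Bag_Lam)

section \<open>Local confluence\<close>

lemma NF_eq_by_red:
  assumes H: "nf_correct_below e" and below: "\<forall>r\<in>A. (r, e) \<in> red_less"
    and fwd: "\<forall>r\<in>A. \<exists>R. red_t r R \<and> R \<subseteq> B"
    and bwd: "\<forall>r'\<in>B. \<exists>r\<in>A. \<exists>R. red_t r R \<and> r' \<in> R"
  shows "NF A = NF B"
proof
  show "NF A \<subseteq> NF B"
  proof
    fix y assume "y \<in> NF A"
    then obtain r where r: "r \<in> A" "y \<in> nf r" by (auto simp: NF_def)
    then obtain R where R: "red_t r R" "R \<subseteq> B" using fwd by blast
    have "nf r = NF R" using nf_expands_below[OF H _ R(1)] below r by blast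
    then show "y \<in> NF B" using r R by (auto simp: NF_def)
  qed
  show "NF B \<subseteq> NF A"
  proof
    fix y assume "y \<in> NF B"
    then obtain r' where r': "r' \<in> B" "y \<in> nf r'" by (auto simp: NF_def)
    then obtain r R where R: "r \<in> A" "red_t r R" "r' \<in> R" using bwd by blast
    have "nf r = NF R" using nf_expands_below[OF H _ R(2)] below R by blast
    then show "y \<in> NF A" using r' R by (auto simp: NF_def)
  qed
qed

lemma red_Bag_inv: "red_t (Bag B) S \<Longrightarrow> \<exists>v C W. B = add_mset v C \<and> red_v v W \<and> S = (\<lambda>w. Bag (add_mset w C)) ` W"
  by (cases rule: red_t.cases) auto

lemma red_Lam_inv: "red_v v W \<Longrightarrow> \<exists>t T. v = Lam t \<and> red_t t T \<and> W = Lam ` T"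
  by (cases rule: red_v.cases) auto

lemma red_Bag_single_inv: "red_t (Bag {#v#}) S \<Longrightarrow> \<exists>a A. v = Lam a \<and> red_t a A \<and> S = (\<lambda>t'. Bag {#Lam t'#}) ` A"
proof -
  assume "red_t (Bag {#v#}) S"
  then obtain v' C W where h: "{#v#} = add_mset v' C" "red_v v' W" "S = (\<lambda>w. Bag (add_mset w C)) ` W"
    using red_Bag_inv by blast
  then have "v' = v" "C = {#}" by (metis single_eq_add_mset)+
  with h obtain a A where "v = Lam a" "red_t a A" "W = Lam ` A" using red_Lam_inv by blast
  then show ?thesis using h \<open>C = {#}\<close> by (auto simp: image_image)
qed

lemma red_App_Bag_Lam: "red_t b B \<Longrightarrow> red_t (App (Bag {#Lam b#}) s) ((\<lambda>b'. App (Bag {#Lam b'#}) s) ` B)"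
  using red_t_red_v.r_appL[OF red_Bag_Lam[of b B "{#}"], of s] by (simp add: image_image)

lemma nf_red_single: "nf_correct_below e \<Longrightarrow> (x, e) \<in> red_less \<Longrightarrow> red_t x {y} \<Longrightarrow> nf x = nf y"
  using nf_expands_below by (simp add: NF_def)

lemma linsubst_App_lift: "linsubst (App u (lift_t 0 s2)) V = (\<lambda>r. App r s2) ` linsubst u V"
  unfolding linsubst_def by (auto simp: lsub_t_App_iff lsub_lift_fresh)

lemma linsubst_App_Bag_lift: "linsubst (App (Bag {#lift_v 0 v#}) u) V = App (Bag {#v#}) ` linsubst u V"
  unfolding linsubst_def by (auto simp: lsub_t_App_iff lsub_t_Bag_iff lsub_b_single_iff lsub_lift_fresh)

lemma NF_linsubst_red_body:
  assumes H: "nf_correct_below (App (Bag {#Lam u#}) (Bag V))" and T: "red_t u T"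
  shows "NF (linsubst u V) = NF (\<Union>u'\<in>T. linsubst u' V)"
proof (rule NF_eq_by_red[OF H])
  show "\<forall>r\<in>linsubst u V. (r, App (Bag {#Lam u#}) (Bag V)) \<in> red_less"
    using red_less_red[OF red_t_red_v.r_beta] by blast
  show "\<forall>r\<in>linsubst u V. \<exists>R. red_t r R \<and> R \<subseteq> (\<Union>u'\<in>T. linsubst u' V)"
  proof
    fix r assume "r \<in> linsubst u V"
    then have "lsub_t u 0 V r" by (simp add: linsubst_def)
    then obtain R where "red_t r R" "\<forall>r'\<in>R. \<exists>t'\<in>T. lsub_t t' 0 V r'"
      using lsub_red_body(1)[OF T] by blast
    then show "\<exists>R. red_t r R \<and> R \<subseteq> (\<Union>u'\<in>T. linsubst u' V)" by (auto simp: linsubst_def)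
  qed
  show "\<forall>r'\<in>(\<Union>u'\<in>T. linsubst u' V). \<exists>r\<in>linsubst u V. \<exists>R. red_t r R \<and> r' \<in> R"
  proof
    fix r' assume "r' \<in> (\<Union>u'\<in>T. linsubst u' V)"
    then obtain u' where "u' \<in> T" "lsub_t u' 0 V r'" by (auto simp: linsubst_def)
    from lsub_red_body_inv(1)[OF T this] obtain r R where "lsub_t u 0 V r" "red_t r R" "r' \<in> R" by blast
    then show "\<exists>r\<in>linsubst u V. \<exists>R. red_t r R \<and> r' \<in> R" by (auto simp: linsubst_def)
  qed
qed

lemma NF_linsubst_red_arg:
  assumes H: "nf_correct_below (App (Bag {#Lam u#}) (Bag (add_mset v C)))" and W: "red_v v W"
  shows "NF (linsubst u (add_mset v C)) = NF (\<Union>w\<in>W. linsubst u (add_mset w C))"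
proof (rule NF_eq_by_red[OF H])
  show "\<forall>r\<in>linsubst u (add_mset v C). (r, App (Bag {#Lam u#}) (Bag (add_mset v C))) \<in> red_less"
    using red_less_red[OF red_t_red_v.r_beta] by blast
  show "\<forall>r\<in>linsubst u (add_mset v C). \<exists>R. red_t r R \<and> R \<subseteq> (\<Union>w\<in>W. linsubst u (add_mset w C))"
  proof
    fix r assume "r \<in> linsubst u (add_mset v C)"
    then have "lsub_t u 0 (add_mset v C) r" by (simp add: linsubst_def)
    then obtain R where "red_t r R" "\<forall>r'\<in>R. \<exists>w\<in>W. lsub_t u 0 (add_mset w C) r'"
      using lsub_red_arg(1)[rule_format, of u 0 "add_mset v C" r v W] W by auto
    then show "\<exists>R. red_t r R \<and> R \<subseteq> (\<Union>w\<in>W. linsubst u (add_mset w C))" by (auto simp: linsubst_def)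
  qed
  show "\<forall>r'\<in>(\<Union>w\<in>W. linsubst u (add_mset w C)). \<exists>r\<in>linsubst u (add_mset v C). \<exists>R. red_t r R \<and> r' \<in> R"
  proof
    fix r' assume "r' \<in> (\<Union>w\<in>W. linsubst u (add_mset w C))"
    then obtain w where w: "w \<in> W" "lsub_t u 0 (add_mset w C) r'" by (auto simp: linsubst_def)
    then obtain r R where "lsub_t u 0 (add_mset v C) r" "red_t r R" "r' \<in> R"
      using lsub_red_arg_inv(1)[OF w(2), rule_format, of w W v] W by auto
    then show "\<exists>r\<in>linsubst u (add_mset v C). \<exists>R. red_t r R \<and> r' \<in> R" by (auto simp: linsubst_def)
  qed
qed

lemma lc_beta_fun:
  assumes H: "nf_correct_below (App (Bag {#Lam u#}) (Bag V))" and S: "red_t (Bag {#Lam u#}) S"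
  shows "NF (linsubst u V) = NF ((\<lambda>s'. App s' (Bag V)) ` S)"
proof -
  obtain T where T: "red_t u T" "S = (\<lambda>t'. Bag {#Lam t'#}) ` T" using red_Bag_single_inv[OF S] by auto
  have E: "red_t (App (Bag {#Lam u#}) (Bag V)) ((\<lambda>s'. App s' (Bag V)) ` S)" using S by (rule red_t_red_v.r_appL)
  have "nf (App (Bag {#Lam u'#}) (Bag V)) = NF (linsubst u' V)" if "u' \<in> T" for u'
  proof -
    have "(App (Bag {#Lam u'#}) (Bag V), App (Bag {#Lam u#}) (Bag V)) \<in> red_less"
      using red_less_red[OF E] T(2) that by auto
    then show ?thesis using nf_expands_below[OF H _ red_t_red_v.r_beta] by blast
  qed
  then have "NF ((\<lambda>s'. App s' (Bag V)) ` S) = NF (\<Union>u'\<in>T. linsubst u' V)"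
    using T(2) by (simp add: image_image NF_UN)
  then show ?thesis using NF_linsubst_red_body[OF H T(1)] by simp
qed

lemma lc_beta_arg:
  assumes H: "nf_correct_below (App (Bag {#Lam u#}) (Bag V))" and S: "red_t (Bag V) S"
  shows "NF (linsubst u V) = NF (App (Bag {#Lam u#}) ` S)"
proof -
  obtain v C W where h: "V = add_mset v C" "red_v v W" "S = (\<lambda>w. Bag (add_mset w C)) ` W"
    using red_Bag_inv[OF S] by blast
  have E: "red_t (App (Bag {#Lam u#}) (Bag V)) (App (Bag {#Lam u#}) ` S)" using S by (rule red_t_red_v.r_appR)
  have "nf (App (Bag {#Lam u#}) (Bag (add_mset w C))) = NF (linsubst u (add_mset w C))" if "w \<in> W" for w
  proof -
    have "(App (Bag {#Lam u#}) (Bag (add_mset w C)), App (Bag {#Lam u#}) (Bag V)) \<in> red_less"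
      using red_less_red[OF E] h(3) that by auto
    then show ?thesis using nf_expands_below[OF H _ red_t_red_v.r_beta] by blast
  qed
  then have "NF (App (Bag {#Lam u#}) ` S) = NF (\<Union>w\<in>W. linsubst u (add_mset w C))"
    using h(3) by (simp add: image_image NF_UN)
  then show ?thesis using NF_linsubst_red_arg[OF H[unfolded h(1)] h(2)] h(1) by simp
qed

lemma lc_zero_fun:
  assumes B: "size B \<noteq> 1" and H: "nf_correct_below (App (Bag B) t)" and S: "red_t (Bag B) S"
  shows "NF ((\<lambda>s'. App s' t) ` S) = {}"
proof -
  obtain v C W where h: "B = add_mset v C" "red_v v W" "S = (\<lambda>w. Bag (add_mset w C)) ` W"
    using red_Bag_inv[OF S] by blast
  have E2: "red_t (App (Bag B) t) ((\<lambda>s'. App s' t) ` S)" using S by (rule red_t_red_v.r_appL)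
  have "nf (App (Bag (add_mset w C)) t) = {}" if "w \<in> W" for w
  proof -
    have "(App (Bag (add_mset w C)) t, App (Bag B) t) \<in> red_less" using red_less_red[OF E2] h(3) that by auto
    moreover have "red_t (App (Bag (add_mset w C)) t) {}" using B h(1) by (auto intro: red_t_red_v.r_zero)
    ultimately show ?thesis using nf_expands_below[OF H] by fastforce
  qed
  then show ?thesis using h(3) by (auto simp: image_image)
qed

lemma lc_zero_arg:
  assumes B: "size B \<noteq> 1" and H: "nf_correct_below (App (Bag B) t)" and S: "red_t t T"
  shows "NF (App (Bag B) ` T) = {}"
proof -
  have E2: "red_t (App (Bag B) t) (App (Bag B) ` T)" using S by (rule red_t_red_v.r_appR)
  have "nf (App (Bag B) t') = {}" if "t' \<in> T" for t'
  proof -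
    have "(App (Bag B) t', App (Bag B) t) \<in> red_less" using red_less_red[OF E2] that by auto
    moreover have "red_t (App (Bag B) t') {}" using B by (auto intro: red_t_red_v.r_zero)
    ultimately show ?thesis using nf_expands_below[OF H] by fastforce
  qed
  then show ?thesis by auto
qed

lemma lift_1_lift_0: "lift_t (Suc 0) (lift_t 0 s) = lift_t 0 (lift_t 0 s)" "lift_v (Suc 0) (lift_v 0 v) = lift_v 0 (lift_v 0 v)"
  using lift_lift[of 0 0] by simp_all

lemma lc_sigma1_beta:
  assumes H: "nf_correct_below (App (App (Bag {#Lam u#}) (Bag V)) s2)"
  shows "nf (App (Bag {#Lam (App u (lift_t 0 s2))#}) (Bag V)) = NF ((\<lambda>x. App x s2) ` linsubst u V)"
proof -
  have "(App (Bag {#Lam (App u (lift_t 0 s2))#}) (Bag V), App (App (Bag {#Lam u#}) (Bag V)) s2) \<in> red_less"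
    using red_less_red[OF red_t_red_v.r_sigma1] by blast
  then show ?thesis using nf_expands_below[OF H _ red_t_red_v.r_beta] by (simp add: linsubst_App_lift)
qed

lemma lc_sigma1_sigma3:
  assumes H: "nf_correct_below (App (App (Bag {#Lam u#}) (App (Bag {#Lam t#}) s)) s2)"
  shows "nf (App (Bag {#Lam (App u (lift_t 0 s2))#}) (App (Bag {#Lam t#}) s)) =
    nf (App (App (Bag {#Lam (App (Bag {#lift_v 0 (Lam u)#}) t)#}) s) s2)"
proof -
  let ?e = "App (App (Bag {#Lam u#}) (App (Bag {#Lam t#}) s)) s2"
  let ?l = "App (Bag {#Lam (App u (lift_t 0 s2))#}) (App (Bag {#Lam t#}) s)"
  let ?r = "App (App (Bag {#Lam (App (Bag {#lift_v 0 (Lam u)#}) t)#}) s) s2"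
  let ?r1 = "App (Bag {#Lam (App (App (Bag {#lift_v 0 (Lam u)#}) t) (lift_t 0 s2))#}) s"
  let ?join = "App (Bag {#Lam (App (Bag {#Lam (App (lift_t (Suc 0) u) (lift_t 0 (lift_t 0 s2)))#}) t)#}) s"
  have l: "(?l, ?e) \<in> red_less" using red_less_red[OF red_t_red_v.r_sigma1] by blast
  have r: "(?r, ?e) \<in> red_less"
    using red_less_red[OF red_t_red_v.r_appL[OF red_t_red_v.r_sigma3]] by blast
  have rr1: "red_t ?r {?r1}" by (rule red_t_red_v.r_sigma1)
  have r1: "(?r1, ?e) \<in> red_less" using red_less_red_trans[OF r rr1] by simp
  have r1_join: "red_t ?r1 {?join}"
    using red_App_Bag_Lam[OF red_t_red_v.r_sigma1[of "lift_t (Suc 0) u" t "lift_t 0 s2"], of s] by simp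
  have l_join: "red_t ?l {?join}"
    using red_t_red_v.r_sigma3[of "Lam (App u (lift_t 0 s2))" t s] by (simp add: lift_1_lift_0)
  show ?thesis
    using nf_red_single[OF H l l_join] nf_red_single[OF H r rr1] nf_red_single[OF H r1 r1_join] by simp
qed

lemma lc_sigma1_red_body:
  assumes H: "nf_correct_below (App (App (Bag {#Lam u#}) s1) s2)" and T: "red_t u T"
  shows "nf (App (Bag {#Lam (App u (lift_t 0 s2))#}) s1) = (\<Union>u'\<in>T. nf (App (App (Bag {#Lam u'#}) s1) s2))"
proof -
  let ?e = "App (App (Bag {#Lam u#}) s1) s2"
  have e1: "(App (Bag {#Lam (App u (lift_t 0 s2))#}) s1, ?e) \<in> red_less"
    using red_less_red[OF red_t_red_v.r_sigma1] by blast
  have "red_t ?e ((\<lambda>x. App x s2) ` (\<lambda>u'. App (Bag {#Lam u'#}) s1) ` T)"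
    using red_t_red_v.r_appL[OF red_App_Bag_Lam[OF T]] .
  then have "(App (App (Bag {#Lam u'#}) s1) s2, ?e) \<in> red_less" if "u' \<in> T" for u'
    using red_less_red that by blast
  then have "nf (App (App (Bag {#Lam u'#}) s1) s2) = nf (App (Bag {#Lam (App u' (lift_t 0 s2))#}) s1)"
    if "u' \<in> T" for u'
    using nf_red_single[OF H _ red_t_red_v.r_sigma1] that by blast
  moreover have "red_t (App (Bag {#Lam (App u (lift_t 0 s2))#}) s1)
      ((\<lambda>b. App (Bag {#Lam b#}) s1) ` (\<lambda>x. App x (lift_t 0 s2)) ` T)"
    using red_App_Bag_Lam[OF red_t_red_v.r_appL[OF T]] .
  ultimately show ?thesis using nf_expands_below[OF H e1] by (simp add: image_image)
qed

lemma lc_sigma1_red_s1: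
  assumes H: "nf_correct_below (App (App (Bag {#Lam u#}) s1) s2)" and T: "red_t s1 T"
  shows "nf (App (Bag {#Lam (App u (lift_t 0 s2))#}) s1) = (\<Union>s1'\<in>T. nf (App (App (Bag {#Lam u#}) s1') s2))"
proof -
  let ?e = "App (App (Bag {#Lam u#}) s1) s2"
  have e1: "(App (Bag {#Lam (App u (lift_t 0 s2))#}) s1, ?e) \<in> red_less"
    using red_less_red[OF red_t_red_v.r_sigma1] by blast
  have "red_t ?e ((\<lambda>x. App x s2) ` App (Bag {#Lam u#}) ` T)"
    using red_t_red_v.r_appL[OF red_t_red_v.r_appR[OF T]] .
  then have "nf (App (App (Bag {#Lam u#}) s1') s2) = nf (App (Bag {#Lam (App u (lift_t 0 s2))#}) s1')"
    if "s1' \<in> T" for s1'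
    using nf_red_single[OF H _ red_t_red_v.r_sigma1] red_less_red that by blast
  then show ?thesis using nf_expands_below[OF H e1 red_t_red_v.r_appR[OF T]] by (simp add: image_image)
qed

lemma lc_sigma1_fun:
  assumes H: "nf_correct_below (App (App (Bag {#Lam u#}) s1) s2)" and S: "red_t (App (Bag {#Lam u#}) s1) S"
  shows "nf (App (Bag {#Lam (App u (lift_t 0 s2))#}) s1) = NF ((\<lambda>x. App x s2) ` S)"
proof (rule red_t.cases[OF S])
  fix t V assume "App (Bag {#Lam u#}) s1 = App (Bag {#Lam t#}) (Bag V)" "S = linsubst t V"
  then show ?thesis using lc_sigma1_beta H by auto
next
  fix v t s assume "App (Bag {#Lam u#}) s1 = App (Bag {#v#}) (App (Bag {#Lam t#}) s)"
    "S = {App (Bag {#Lam (App (Bag {#lift_v 0 v#}) t)#}) s}"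
  then show ?thesis using lc_sigma1_sigma3 H by auto
next
  fix s0 S0 t assume "App (Bag {#Lam u#}) s1 = App s0 t" "S = (\<lambda>s'. App s' t) ` S0" "red_t s0 S0"
  moreover then obtain T where "red_t u T" "S0 = (\<lambda>t'. Bag {#Lam t'#}) ` T"
    using red_Bag_single_inv[of "Lam u" S0] by auto
  ultimately show ?thesis using lc_sigma1_red_body[OF H] by (simp add: image_image)
next
  fix t T s0 assume "App (Bag {#Lam u#}) s1 = App s0 t" "S = App s0 ` T" "red_t t T"
  then show ?thesis using lc_sigma1_red_s1[OF H] by (simp add: image_image)
qed auto

lemma lc_sigma1_red_s2:
  assumes H: "nf_correct_below (App (App (Bag {#Lam u#}) s1) s2)" and S: "red_t s2 S2"
  shows "nf (App (Bag {#Lam (App u (lift_t 0 s2))#}) s1) = NF (App (App (Bag {#Lam u#}) s1) ` S2)"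
proof -
  let ?e = "App (App (Bag {#Lam u#}) s1) s2"
  let ?e1 = "App (Bag {#Lam (App u (lift_t 0 s2))#}) s1"
  have e1: "(?e1, ?e) \<in> red_less" using red_less_red[OF red_t_red_v.r_sigma1] by blast
  have E2: "red_t ?e (App (App (Bag {#Lam u#}) s1) ` S2)" using S by (rule red_t_red_v.r_appR)
  have "NF (App (App (Bag {#Lam u#}) s1) ` S2) = (\<Union>s2'\<in>S2. nf (App (Bag {#Lam (App u (lift_t 0 s2'))#}) s1))"
  proof -
    have "nf (App (App (Bag {#Lam u#}) s1) s2') = nf (App (Bag {#Lam (App u (lift_t 0 s2'))#}) s1)" if "s2' \<in> S2" for s2'
      using red_less_red[OF E2] that nf_red_single[OF H _ red_t_red_v.r_sigma1] by blast
    then show ?thesis by auto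
  qed
  also have "\<dots> = nf ?e1"
  proof -
    have "red_t ?e1 ((\<lambda>b'. App (Bag {#Lam b'#}) s1) ` (App u ` (lift_t 0 ` S2)))"
      using red_App_Bag_Lam[OF red_t_red_v.r_appR[OF red_lift(1)[OF S, of 0]]] by blast
    then show ?thesis using nf_expands_below[OF H e1] by (simp add: image_image)
  qed
  finally show ?thesis by simp
qed

lemma lc_sigma3_red_v:
  assumes H: "nf_correct_below (App (Bag {#v#}) (App (Bag {#Lam u#}) s))" and S: "red_t (Bag {#v#}) S"
  shows "nf (App (Bag {#Lam (App (Bag {#lift_v 0 v#}) u)#}) s) = NF ((\<lambda>x. App x (App (Bag {#Lam u#}) s)) ` S)"
proof -
  let ?e = "App (Bag {#v#}) (App (Bag {#Lam u#}) s)"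
  let ?e1 = "App (Bag {#Lam (App (Bag {#lift_v 0 v#}) u)#}) s"
  have e1: "(?e1, ?e) \<in> red_less" using red_less_red[OF red_t_red_v.r_sigma3] by blast
  have E2: "red_t ?e ((\<lambda>x. App x (App (Bag {#Lam u#}) s)) ` S)" using S by (rule red_t_red_v.r_appL)
  obtain a A where h: "v = Lam a" "red_t a A" "S = (\<lambda>t'. Bag {#Lam t'#}) ` A" using red_Bag_single_inv[OF S] by blast
  have "NF ((\<lambda>x. App x (App (Bag {#Lam u#}) s)) ` S) =
     (\<Union>a'\<in>A. nf (App (Bag {#Lam (App (Bag {#Lam (lift_t (Suc 0) a')#}) u)#}) s))"
  proof -
    have "nf (App (Bag {#Lam a'#}) (App (Bag {#Lam u#}) s)) = nf (App (Bag {#Lam (App (Bag {#Lam (lift_t (Suc 0) a')#}) u)#}) s)"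
      if "a' \<in> A" for a'
    proof -
      have "(App (Bag {#Lam a'#}) (App (Bag {#Lam u#}) s), ?e) \<in> red_less" using red_less_red[OF E2] that h by auto
      then show ?thesis using nf_red_single[OF H _ red_t_red_v.r_sigma3[of "Lam a'" u s]] by simp
    qed
    then show ?thesis using h by (simp add: image_image)
  qed
  also have "\<dots> = nf ?e1"
  proof -
    have "red_t (Bag {#Lam (lift_t (Suc 0) a)#}) ((\<lambda>t'. Bag {#Lam t'#}) ` (lift_t (Suc 0) ` A))"
      using red_Bag_Lam[OF red_lift(1)[OF h(2), of "Suc 0"], of "{#}"] by simp
    from red_App_Bag_Lam[OF red_t_red_v.r_appL[OF this, of u], of s]
    have "red_t ?e1 ((\<lambda>b'. App (Bag {#Lam b'#}) s) ` ((\<lambda>x. App x u) ` ((\<lambda>t'. Bag {#Lam t'#}) ` (lift_t (Suc 0) ` A))))"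
      using h by simp
    then show ?thesis using nf_expands_below[OF H e1] by (simp add: image_image)
  qed
  finally show ?thesis by simp
qed

lemma lc_sigma3_beta:
  assumes H: "nf_correct_below (App (Bag {#v#}) (App (Bag {#Lam u#}) (Bag V)))"
  shows "nf (App (Bag {#Lam (App (Bag {#lift_v 0 v#}) u)#}) (Bag V)) = NF (App (Bag {#v#}) ` linsubst u V)"
proof -
  have "(App (Bag {#Lam (App (Bag {#lift_v 0 v#}) u)#}) (Bag V), App (Bag {#v#}) (App (Bag {#Lam u#}) (Bag V)))
      \<in> red_less"
    using red_less_red[OF red_t_red_v.r_sigma3] by blast
  then show ?thesis using nf_expands_below[OF H _ red_t_red_v.r_beta] by (simp add: linsubst_App_Bag_lift)
qed

lemma lc_sigma3_sigma3:
  assumes H: "nf_correct_below (App (Bag {#v#}) (App (Bag {#Lam u#}) (App (Bag {#Lam t#}) s)))"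
  shows "nf (App (Bag {#Lam (App (Bag {#lift_v 0 v#}) u)#}) (App (Bag {#Lam t#}) s)) =
    nf (App (Bag {#v#}) (App (Bag {#Lam (App (Bag {#lift_v 0 (Lam u)#}) t)#}) s))"
proof -
  let ?e = "App (Bag {#v#}) (App (Bag {#Lam u#}) (App (Bag {#Lam t#}) s))"
  let ?l = "App (Bag {#Lam (App (Bag {#lift_v 0 v#}) u)#}) (App (Bag {#Lam t#}) s)"
  let ?r = "App (Bag {#v#}) (App (Bag {#Lam (App (Bag {#lift_v 0 (Lam u)#}) t)#}) s)"
  let ?r1 = "App (Bag {#Lam (App (Bag {#lift_v 0 v#}) (App (Bag {#lift_v 0 (Lam u)#}) t))#}) s"
  let ?join = "App (Bag {#Lam (App (Bag {#Lam (App (Bag {#lift_v 0 (lift_v 0 v)#}) (lift_t (Suc 0) u))#}) t)#}) s"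
  have l: "(?l, ?e) \<in> red_less" using red_less_red[OF red_t_red_v.r_sigma3] by blast
  have r: "(?r, ?e) \<in> red_less"
    using red_less_red[OF red_t_red_v.r_appR[OF red_t_red_v.r_sigma3]] by blast
  have rr1: "red_t ?r {?r1}" by (rule red_t_red_v.r_sigma3)
  have r1: "(?r1, ?e) \<in> red_less" using red_less_red_trans[OF r rr1] by simp
  have r1_join: "red_t ?r1 {?join}"
    using red_App_Bag_Lam[OF red_t_red_v.r_sigma3[of "lift_v 0 v" "lift_t (Suc 0) u" t], of s] by simp
  have l_join: "red_t ?l {?join}"
    using red_t_red_v.r_sigma3[of "Lam (App (Bag {#lift_v 0 v#}) u)" t s] by (simp add: lift_1_lift_0)
  show ?thesis
    using nf_red_single[OF H l l_join] nf_red_single[OF H r rr1] nf_red_single[OF H r1 r1_join] by simp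
qed

lemma lc_sigma3_red_body:
  assumes H: "nf_correct_below (App (Bag {#v#}) (App (Bag {#Lam u#}) s))" and T: "red_t u T"
  shows "nf (App (Bag {#Lam (App (Bag {#lift_v 0 v#}) u)#}) s) =
    (\<Union>u'\<in>T. nf (App (Bag {#v#}) (App (Bag {#Lam u'#}) s)))"
proof -
  let ?e = "App (Bag {#v#}) (App (Bag {#Lam u#}) s)"
  have e1: "(App (Bag {#Lam (App (Bag {#lift_v 0 v#}) u)#}) s, ?e) \<in> red_less"
    using red_less_red[OF red_t_red_v.r_sigma3] by blast
  have "red_t ?e (App (Bag {#v#}) ` (\<lambda>u'. App (Bag {#Lam u'#}) s) ` T)"
    using red_t_red_v.r_appR[OF red_App_Bag_Lam[OF T]] .
  then have "nf (App (Bag {#v#}) (App (Bag {#Lam u'#}) s)) = nf (App (Bag {#Lam (App (Bag {#lift_v 0 v#}) u')#}) s)"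
    if "u' \<in> T" for u'
    using nf_red_single[OF H _ red_t_red_v.r_sigma3] red_less_red that by blast
  moreover have "red_t (App (Bag {#Lam (App (Bag {#lift_v 0 v#}) u)#}) s)
      ((\<lambda>b. App (Bag {#Lam b#}) s) ` App (Bag {#lift_v 0 v#}) ` T)"
    using red_App_Bag_Lam[OF red_t_red_v.r_appR[OF T]] .
  ultimately show ?thesis using nf_expands_below[OF H e1] by (simp add: image_image)
qed

lemma lc_sigma3_red_s:
  assumes H: "nf_correct_below (App (Bag {#v#}) (App (Bag {#Lam u#}) s))" and T: "red_t s T"
  shows "nf (App (Bag {#Lam (App (Bag {#lift_v 0 v#}) u)#}) s) =
    (\<Union>s'\<in>T. nf (App (Bag {#v#}) (App (Bag {#Lam u#}) s')))"
proof -
  let ?e = "App (Bag {#v#}) (App (Bag {#Lam u#}) s)"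
  have e1: "(App (Bag {#Lam (App (Bag {#lift_v 0 v#}) u)#}) s, ?e) \<in> red_less"
    using red_less_red[OF red_t_red_v.r_sigma3] by blast
  have "red_t ?e (App (Bag {#v#}) ` App (Bag {#Lam u#}) ` T)"
    using red_t_red_v.r_appR[OF red_t_red_v.r_appR[OF T]] .
  then have "nf (App (Bag {#v#}) (App (Bag {#Lam u#}) s')) = nf (App (Bag {#Lam (App (Bag {#lift_v 0 v#}) u)#}) s')"
    if "s' \<in> T" for s'
    using nf_red_single[OF H _ red_t_red_v.r_sigma3] red_less_red that by blast
  then show ?thesis using nf_expands_below[OF H e1 red_t_red_v.r_appR[OF T]] by (simp add: image_image)
qed

lemma lc_sigma3_arg:
  assumes H: "nf_correct_below (App (Bag {#v#}) (App (Bag {#Lam u#}) s))" and S: "red_t (App (Bag {#Lam u#}) s) S"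
  shows "nf (App (Bag {#Lam (App (Bag {#lift_v 0 v#}) u)#}) s) = NF (App (Bag {#v#}) ` S)"
proof (rule red_t.cases[OF S])
  fix t V assume "App (Bag {#Lam u#}) s = App (Bag {#Lam t#}) (Bag V)" "S = linsubst t V"
  then show ?thesis using lc_sigma3_beta H by auto
next
  fix v' t s3 assume "App (Bag {#Lam u#}) s = App (Bag {#v'#}) (App (Bag {#Lam t#}) s3)"
    "S = {App (Bag {#Lam (App (Bag {#lift_v 0 v'#}) t)#}) s3}"
  then show ?thesis using lc_sigma3_sigma3 H by auto
next
  fix s0 S0 t assume "App (Bag {#Lam u#}) s = App s0 t" "S = (\<lambda>s'. App s' t) ` S0" "red_t s0 S0"
  moreover then obtain T where "red_t u T" "S0 = (\<lambda>t'. Bag {#Lam t'#}) ` T"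
    using red_Bag_single_inv[of "Lam u" S0] by auto
  ultimately show ?thesis using lc_sigma3_red_body[OF H] by (simp add: image_image)
next
  fix t T s0 assume "App (Bag {#Lam u#}) s = App s0 t" "S = App s0 ` T" "red_t t T"
  then show ?thesis using lc_sigma3_red_s[OF H] by (simp add: image_image)
qed auto

lemma NF_red_fun:
  assumes H: "nf_correct_below (App s t)" and S: "red_t s S"
  shows "NF ((\<lambda>s'. App s' t) ` S) = app_nf s t"
proof -
  have "red_t (App s t) ((\<lambda>s'. App s' t) ` S)" using S by (rule red_t_red_v.r_appL)
  then have "NF ((\<lambda>s'. App s' t) ` S) = (\<Union>s'\<in>S. app_nf s' t)"
    using nf_App_below[OF H] red_less_red by simp
  also have "\<dots> = app_nf s t" using nf_expands_below[OF H red_less_App(1) S] by (auto simp: app_nf_def NF_def)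
  finally show ?thesis .
qed

lemma NF_red_arg:
  assumes H: "nf_correct_below (App s t)" and T: "red_t t T"
  shows "NF (App s ` T) = app_nf s t"
proof -
  have "red_t (App s t) (App s ` T)" using T by (rule red_t_red_v.r_appR)
  then have "NF (App s ` T) = (\<Union>t'\<in>T. app_nf s t')"
    using nf_App_below[OF H] red_less_red by simp
  also have "\<dots> = app_nf s t" using nf_expands_below[OF H red_less_App(2) T] by (auto simp: app_nf_def NF_def)
  finally show ?thesis .
qed

lemma NF_red_Bag_Lam:
  assumes H: "nf_correct_below (Bag (add_mset (Lam t) C))" and T: "red_t t T"
  shows "NF ((\<lambda>t'. Bag (add_mset (Lam t') C)) ` T) = (\<Union>u\<in>nf t. nf (Bag (add_mset (Lam u) C)))"
proof -
  have "red_t (Bag (add_mset (Lam t) C)) ((\<lambda>t'. Bag (add_mset (Lam t') C)) ` T)" using T by (rule red_Bag_Lam)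
  then have "NF ((\<lambda>t'. Bag (add_mset (Lam t') C)) ` T) = (\<Union>t'\<in>T. \<Union>u\<in>nf t'. nf (Bag (add_mset (Lam u) C)))"
    using nf_Bag_Lam_below[OF H] red_less_red by simp
  also have "\<dots> = (\<Union>u\<in>nf t. nf (Bag (add_mset (Lam u) C)))"
    using nf_expands_below[OF H red_less_Bag_Lam T] by (auto simp: NF_def)
  finally show ?thesis .
qed

lemma nf_Bag_Lam_Lam_below:
  assumes H: "nf_correct_below e" and e: "(Bag (add_mset (Lam a) (add_mset (Lam b) D)), e) \<in> red_less"
  shows "nf (Bag (add_mset (Lam a) (add_mset (Lam b) D))) =
    (\<Union>u1\<in>nf a. \<Union>u2\<in>nf b. nf (Bag (add_mset (Lam u1) (add_mset (Lam u2) D))))"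
proof -
  have "nf (Bag (add_mset (Lam a) (add_mset (Lam b) D))) = (\<Union>u1\<in>nf a. nf (Bag (add_mset (Lam u1) (add_mset (Lam b) D))))"
    by (rule nf_Bag_Lam_below[OF H e])
  also have "\<dots> = (\<Union>u1\<in>nf a. \<Union>u2\<in>nf b. nf (Bag (add_mset (Lam u1) (add_mset (Lam u2) D))))"
  proof (rule SUP_cong[OF refl])
    fix u1 assume "u1 \<in> nf a"
    then have "red_le u1 a" using red_le_nf nf_correct_belowD[OF H red_less_trans[OF e red_less_Bag_Lam]] by blast
    then have "(Bag (add_mset (Lam b) (add_mset (Lam u1) D)), e) \<in> red_less"
      using red_le_less_trans[OF red_le_Bag_Lam e] by (metis add_mset_commute)
    from nf_Bag_Lam_below[OF H this]
    show "nf (Bag (add_mset (Lam u1) (add_mset (Lam b) D))) =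
        (\<Union>u2\<in>nf b. nf (Bag (add_mset (Lam u1) (add_mset (Lam u2) D))))"
      by (simp add: add_mset_commute)
  qed
  finally show ?thesis .
qed

lemma NF_red_Bag_other:
  assumes H: "nf_correct_below (Bag (add_mset (Lam t1) (add_mset (Lam t2) D)))" and T1: "red_t t1 T1"
  shows "NF ((\<lambda>t'. Bag (add_mset (Lam t') (add_mset (Lam t2) D))) ` T1) =
    (\<Union>u1\<in>nf t1. \<Union>u2\<in>nf t2. nf (Bag (add_mset (Lam u1) (add_mset (Lam u2) D))))"
proof -
  have "red_t (Bag (add_mset (Lam t1) (add_mset (Lam t2) D))) ((\<lambda>t'. Bag (add_mset (Lam t') (add_mset (Lam t2) D))) ` T1)"
    using T1 by (rule red_Bag_Lam)
  then have "NF ((\<lambda>t'. Bag (add_mset (Lam t') (add_mset (Lam t2) D))) ` T1) =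
      (\<Union>t'\<in>T1. \<Union>u1\<in>nf t'. \<Union>u2\<in>nf t2. nf (Bag (add_mset (Lam u1) (add_mset (Lam u2) D))))"
    using nf_Bag_Lam_Lam_below[OF H] red_less_red by simp
  also have "\<dots> = (\<Union>u1\<in>nf t1. \<Union>u2\<in>nf t2. nf (Bag (add_mset (Lam u1) (add_mset (Lam u2) D))))"
    using nf_expands_below[OF H red_less_Bag_Lam T1] by (auto simp: NF_def)
  finally show ?thesis .
qed

lemma NF_red_App_fun_red:
  assumes H: "nf_correct_below (App s t)" and S: "red_t s S" and E: "red_t (App s t) E"
  shows "NF E = app_nf s t"
proof (rule red_t.cases[OF E])
  fix u V assume a: "App s t = App (Bag {#Lam u#}) (Bag V)" "E = linsubst u V"
  then show ?thesis using lc_beta_fun[of u V S] NF_red_fun[OF H S] H S unfolding app_nf_def by auto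
next
  fix B t0 assume a: "App s t = App (Bag B) t0" "E = {}" "size B \<noteq> 1"
  then show ?thesis using lc_zero_fun[of B t S] NF_red_fun[OF H S] H S unfolding app_nf_def by auto
next
  fix u s1 s2 assume a: "App s t = App (App (Bag {#Lam u#}) s1) s2" "E = {App (Bag {#Lam (App u (lift_t 0 s2))#}) s1}"
  then show ?thesis using lc_sigma1_fun[of u s1 s2 S] NF_red_fun[OF H S] H S unfolding app_nf_def by auto
next
  fix v u s0 assume a: "App s t = App (Bag {#v#}) (App (Bag {#Lam u#}) s0)"
    "E = {App (Bag {#Lam (App (Bag {#lift_v 0 v#}) u)#}) s0}"
  then show ?thesis using lc_sigma3_red_v[of v u s0 S] NF_red_fun[OF H S] H S unfolding app_nf_def by auto
next
  fix s' S' t' assume a: "App s t = App s' t'" "E = (\<lambda>x. App x t') ` S'" "red_t s' S'"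
  then show ?thesis using NF_red_fun[OF H] unfolding app_nf_def by auto
next
  fix t' T' s' assume a: "App s t = App s' t'" "E = App s' ` T'" "red_t t' T'"
  then show ?thesis using NF_red_arg[OF H] unfolding app_nf_def by auto
next
  fix v W B assume "App s t = Bag (add_mset v B)"
  then show ?thesis by simp
qed

lemma NF_red_App_arg_red:
  assumes H: "nf_correct_below (App s t)" and T: "red_t t T" and E: "red_t (App s t) E"
  shows "NF E = app_nf s t"
proof (rule red_t.cases[OF E])
  fix u V assume a: "App s t = App (Bag {#Lam u#}) (Bag V)" "E = linsubst u V"
  then show ?thesis using lc_beta_arg[of u V T] NF_red_arg[OF H T] H T unfolding app_nf_def by auto
next
  fix B t0 assume a: "App s t = App (Bag B) t0" "E = {}" "size B \<noteq> 1"
  then show ?thesis using lc_zero_arg[of B t T] NF_red_arg[OF H T] H T unfolding app_nf_def by auto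
next
  fix u s1 s2 assume a: "App s t = App (App (Bag {#Lam u#}) s1) s2" "E = {App (Bag {#Lam (App u (lift_t 0 s2))#}) s1}"
  then show ?thesis using lc_sigma1_red_s2[of u s1 s2 T] NF_red_arg[OF H T] H T unfolding app_nf_def by auto
next
  fix v u s0 assume a: "App s t = App (Bag {#v#}) (App (Bag {#Lam u#}) s0)"
    "E = {App (Bag {#Lam (App (Bag {#lift_v 0 v#}) u)#}) s0}"
  then show ?thesis using lc_sigma3_arg[of v u s0 T] NF_red_arg[OF H T] H T unfolding app_nf_def by auto
next
  fix s' S' t' assume a: "App s t = App s' t'" "E = (\<lambda>x. App x t') ` S'" "red_t s' S'"
  then show ?thesis using NF_red_fun[OF H] unfolding app_nf_def by auto
next
  fix t' T' s' assume a: "App s t = App s' t'" "E = App s' ` T'" "red_t t' T'"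
  then show ?thesis using NF_red_arg[OF H] unfolding app_nf_def by auto
next
  fix v W B assume "App s t = Bag (add_mset v B)"
  then show ?thesis by simp
qed

lemma red_App_irreducible_unique:
  assumes "irreducible s" "irreducible t" "red_t (App s t) E1" "red_t (App s t) E2"
  shows "E1 = E2"
  by (rule red_t.cases[OF assms(3)]; rule red_t.cases[OF assms(4)])
    (use assms(1,2) in \<open>auto simp: irreducible_def\<close>)

text \<open>If a component of \<open>s t\<close> is reducible, every one-step reduct of \<open>s t\<close> has the normal forms
  \<open>app_nf s t\<close>; otherwise only one rule applies to \<open>s t\<close>.\<close>

lemma local_confluence_App:
  assumes H: "nf_correct_below (App s t)" and E1: "red_t (App s t) E1" and E2: "red_t (App s t) E2"
  shows "NF E1 = NF E2"
proof (cases "irreducible s \<and> irreducible t")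
  case True
  then show ?thesis using red_App_irreducible_unique E1 E2 by blast
next
  case False
  then consider S where "red_t s S" | T where "red_t t T" unfolding irreducible_def by blast
  then show ?thesis
  proof cases
    case 1
    then show ?thesis using NF_red_App_fun_red[OF H 1 E1] NF_red_App_fun_red[OF H 1 E2] by simp
  next
    case 2
    then show ?thesis using NF_red_App_arg_red[OF H 2 E1] NF_red_App_arg_red[OF H 2 E2] by simp
  qed
qed

lemma local_confluence_Bag:
  assumes H: "nf_correct_below (Bag B)" and E1: "red_t (Bag B) E1" and E2: "red_t (Bag B) E2"
  shows "NF E1 = NF E2"
proof -
  obtain v1 C1 W1 where h1: "B = add_mset v1 C1" "red_v v1 W1" "E1 = (\<lambda>w. Bag (add_mset w C1)) ` W1"
    using red_Bag_inv[OF E1] by blast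
  obtain t1 T1 where g1: "v1 = Lam t1" "red_t t1 T1" "W1 = Lam ` T1" using red_Lam_inv[OF h1(2)] by blast
  obtain v2 C2 W2 where h2: "B = add_mset v2 C2" "red_v v2 W2" "E2 = (\<lambda>w. Bag (add_mset w C2)) ` W2"
    using red_Bag_inv[OF E2] by blast
  obtain t2 T2 where g2: "v2 = Lam t2" "red_t t2 T2" "W2 = Lam ` T2" using red_Lam_inv[OF h2(2)] by blast
  have e1: "E1 = (\<lambda>t'. Bag (add_mset (Lam t') C1)) ` T1" using h1 g1 by (simp add: image_image)
  have e2: "E2 = (\<lambda>t'. Bag (add_mset (Lam t') C2)) ` T2" using h2 g2 by (simp add: image_image)
  show ?thesis
  proof (cases "v1 = v2")
    case True
    then have "C1 = C2" "t1 = t2" using h1 h2 g1 g2 by auto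
    then show ?thesis using NF_red_Bag_Lam[of t1 C1 T1] NF_red_Bag_Lam[of t2 C2 T2] H h1 h2 g1 g2 e1 e2 by simp
  next
    case False
    then obtain D where D: "C1 = add_mset v2 D" "C2 = add_mset v1 D" using h1(1) h2(1)
      by (metis add_eq_conv_ex)
    have B1: "B = add_mset (Lam t1) (add_mset (Lam t2) D)" using h1 D g1 g2 by simp
    have B2: "B = add_mset (Lam t2) (add_mset (Lam t1) D)" using h1 D g1 g2 by (simp add: add_mset_commute)
    have "NF E1 = (\<Union>u1\<in>nf t1. \<Union>u2\<in>nf t2. nf (Bag (add_mset (Lam u1) (add_mset (Lam u2) D))))"
      using NF_red_Bag_other[of t1 t2 D T1] H B1 e1 D g1 g2 by simp
    moreover have "NF E2 = (\<Union>u2\<in>nf t2. \<Union>u1\<in>nf t1. nf (Bag (add_mset (Lam u2) (add_mset (Lam u1) D))))"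
      using NF_red_Bag_other[of t2 t1 D T2] H B2 e2 D g1 g2 by simp
    moreover have "(\<Union>u2\<in>nf t2. \<Union>u1\<in>nf t1. nf (Bag (add_mset (Lam u2) (add_mset (Lam u1) D)))) =
        (\<Union>u1\<in>nf t1. \<Union>u2\<in>nf t2. nf (Bag (add_mset (Lam u1) (add_mset (Lam u2) D))))"
      by (auto; metis add_mset_commute)
    ultimately show ?thesis by simp
  qed
qed

lemma local_confluence:
  assumes H: "nf_correct_below e" and E1: "red_t e E1" and E2: "red_t e E2"
  shows "NF E1 = NF E2"
proof (cases e)
  case (App s t)
  then show ?thesis using local_confluence_App H E1 E2 by blast
next
  case (Bag B)
  then show ?thesis using local_confluence_Bag H E1 E2 by blast
qed

theorem nf_correct_all: "nf_correct e"
proof (induction e rule: red_less_induct)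
  case (less x)
  have "nf_correct_below x" unfolding nf_correct_below_def using less by blast
  then show ?case using nf_correct_step local_confluence by blast
qed

lemma nf_correct_below_all: "nf_correct_below e"
  unfolding nf_correct_below_def using nf_correct_all by blast

lemma nf_App: "nf (App a b) = app_nf a b"
  using nf_App_below[OF nf_correct_below_all red_less_App(1)[of "App a b"]] .

lemma nf_Bag_Lam: "nf (Bag (add_mset (Lam u) C)) = (\<Union>u'\<in>nf u. nf (Bag (add_mset (Lam u') C)))"
  using nf_Bag_Lam_below[OF nf_correct_below_all red_less_App(1)[of "Bag (add_mset (Lam u) C)"]] .

section \<open>Taylor expansion\<close>

lemma NF_taylor_LApp: "NF (taylor (LApp P Q)) = (\<Union>a\<in>NF (taylor P). \<Union>b\<in>NF (taylor Q). nf (App a b))"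
proof -
  have "NF (taylor (LApp P Q)) = (\<Union>s\<in>taylor P. \<Union>t\<in>taylor Q. nf (App s t))"
    unfolding NF_def by auto
  also have "\<dots> = (\<Union>s\<in>taylor P. \<Union>t\<in>taylor Q. \<Union>a\<in>nf s. \<Union>b\<in>nf t. nf (App a b))"
    by (intro SUP_cong refl nf_App[unfolded app_nf_def])
  also have "\<dots> = (\<Union>a\<in>NF (taylor P). \<Union>b\<in>NF (taylor Q). nf (App a b))"
    unfolding NF_def by blast
  finally show ?thesis .
qed

definition lam_bags :: "nat \<Rightarrow> rterm set \<Rightarrow> rval multiset set" where
  "lam_bags n Y = {B. size B = n \<and> set_mset B \<subseteq> Lam ` Y}"

lemma lam_bags_0: "lam_bags 0 Y = {{#}}" by (auto simp: lam_bags_def)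

lemma lam_bags_Suc: "lam_bags (Suc n) Y = (\<Union>y\<in>Y. add_mset (Lam y) ` lam_bags n Y)"
proof
  show "lam_bags (Suc n) Y \<subseteq> (\<Union>y\<in>Y. add_mset (Lam y) ` lam_bags n Y)"
  proof
    fix B assume "B \<in> lam_bags (Suc n) Y"
    then have B: "size B = Suc n" "set_mset B \<subseteq> Lam ` Y" by (auto simp: lam_bags_def)
    then obtain w B0 where "B = add_mset w B0" by (metis size_eq_Suc_imp_eq_union)
    moreover then obtain y where "w = Lam y" "y \<in> Y" using B by auto
    ultimately show "B \<in> (\<Union>y\<in>Y. add_mset (Lam y) ` lam_bags n Y)" using B by (auto simp: lam_bags_def)
  qed
  show "(\<Union>y\<in>Y. add_mset (Lam y) ` lam_bags n Y) \<subseteq> lam_bags (Suc n) Y" by (auto simp: lam_bags_def)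
qed

lemma NF_lam_bags:
  "(\<Union>B\<in>lam_bags n X. nf (Bag (B + C))) = (\<Union>B\<in>lam_bags n (NF X). nf (Bag (B + C)))"
proof (induction n arbitrary: C)
  case 0
  then show ?case by (simp add: lam_bags_0)
next
  case (Suc n)
  have "(\<Union>B\<in>lam_bags (Suc n) X. nf (Bag (B + C))) =
      (\<Union>x\<in>X. \<Union>B0\<in>lam_bags n X. nf (Bag (add_mset (Lam x) (B0 + C))))"
    by (simp add: lam_bags_Suc)
  also have "\<dots> = (\<Union>x\<in>X. \<Union>B0\<in>lam_bags n (NF X). nf (Bag (add_mset (Lam x) (B0 + C))))"
  proof (rule SUP_cong[OF refl])
    fix x
    show "(\<Union>B0\<in>lam_bags n X. nf (Bag (add_mset (Lam x) (B0 + C)))) =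
        (\<Union>B0\<in>lam_bags n (NF X). nf (Bag (add_mset (Lam x) (B0 + C))))"
      using Suc.IH[of "add_mset (Lam x) C"] by simp
  qed
  also have "\<dots> = (\<Union>B0\<in>lam_bags n (NF X). \<Union>x\<in>X. nf (Bag (add_mset (Lam x) (B0 + C))))"
    by blast
  also have "\<dots> = (\<Union>B0\<in>lam_bags n (NF X). \<Union>x\<in>X. \<Union>u\<in>nf x. nf (Bag (add_mset (Lam u) (B0 + C))))"
    by (intro SUP_cong refl nf_Bag_Lam)
  also have "\<dots> = (\<Union>B0\<in>lam_bags n (NF X). \<Union>u\<in>NF X. nf (Bag (add_mset (Lam u) (B0 + C))))"
    by (auto simp: NF_def)
  also have "\<dots> = (\<Union>B\<in>lam_bags (Suc n) (NF X). nf (Bag (B + C)))"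
    by (auto simp: lam_bags_Suc)
  finally show ?case .
qed

lemma NF_taylor_LLam: "NF (taylor (LLam N)) = (\<Union>n. \<Union>B\<in>lam_bags n (NF (taylor N)). nf (Bag B))"
proof -
  have "taylor (LLam N) = Bag ` (\<Union>n. lam_bags n (taylor N))" by (auto simp: lam_bags_def)
  then have "NF (taylor (LLam N)) = (\<Union>n. \<Union>B\<in>lam_bags n (taylor N). nf (Bag B))" unfolding NF_def by auto
  also have "\<dots> = (\<Union>n. \<Union>B\<in>lam_bags n (NF (taylor N)). nf (Bag B))"
    using NF_lam_bags[where X = "taylor N" and C = "{#}"] by simp
  finally show ?thesis .
qed

lemma NF_taylor_LLam_funpow_cong:
  "NF (taylor M) = NF (taylor N) \<Longrightarrow> NF (taylor ((LLam ^^ n) M)) = NF (taylor ((LLam ^^ n) N))"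
  by (induction n) (simp_all del: taylor.simps add: NF_taylor_LLam)

lemma NF_taylor_foldl_LApp_cong:
  "NF (taylor M) = NF (taylor N) \<Longrightarrow> NF (taylor (foldl LApp M Vs)) = NF (taylor (foldl LApp N Vs))"
proof (induction Vs arbitrary: M N)
  case (Cons V Vs)
  have "NF (taylor (LApp M V)) = NF (taylor (LApp N V))" by (simp only: NF_taylor_LApp Cons.prems)
  then show ?case using Cons.IH by simp
qed simp

theorem lemma4p6:
  fixes M N :: lterm
  assumes "NF (taylor M) = NF (taylor N)"
  shows "\<forall>n Vs. (\<forall>V\<in>set Vs. is_lvalue V) \<longrightarrow>
           NF (taylor (plug_head n Vs M)) = NF (taylor (plug_head n Vs N))"
  \<comment> \<open>That the arguments are values is not needed.\<close>
  unfolding plug_head_def using NF_taylor_foldl_LApp_cong[OF NF_taylor_LLam_funpow_cong[OF assms]] by blast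

end
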